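(* Let $k$ be a field of characteristic $0$ containing a primitive fifth root of unity $\zeta$. For $\underline{a}=(a_1,\ldots,a_7)\in k^7$ let $X_{\underline{a}}\subset\mathbb{P}^4$ be defined by $$a_1x_0^3 + a_2x_0x_1x_4 + a_3x_0x_2x_3 + a_4x_1^2x_3 + a_5x_1x_2^2 + a_6x_2x_4^2+a_7x_3^2x_4=0,$$ and assume $X_{\underline{a}}$ is a smooth cubic threefold and that $a_2\neq 0$ or $a_3\neq0$. Then there is a change of coordinates in $\mathbb{P}^4_{\bar k}$ such that $X_{\underline a}$ is isomorphic to $$X_{a,b}:\quad F_{a,b}:=xu^2+2yuv+zv^2+2z^2u+2x^2v+ay^3+bxyz=0$$ for some $a,b\in\bar k$, where $(u:v:x:y:z)$ are homogeneous coordinates on $\mathbb{P}^4$. Moreover, $X_{a,b}$ is smooth if and only if $$D(a,b):=a\,\Delta(a,b)\neq 0,\qquad \Delta(a,b):=512 a^2 + 27 a^3 + 48 a^2 b + 128 a b^2 + 6 a^2 b^2 + 30 a b^3+ a^2 b^3 + 8 b^4 + 2 a b^4 + b^5 .$$ The threefold $X_{a,b}$ has the automorphisms $$\alpha_X(u:v:x:y:z)=(\zeta^2u:\zeta^3v:\zeta x:y:\zeta^4z),\qquad \iota_X(u:v:x:y:z)=(v:u:z:y:x)$$ of order five and two respectively, and they generate a dihedral subgroup $D_5$ of order $10$ of $\mathrm{Aut}(X_{a,b})$. *)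

theory Defs
  imports "HOL-Algebra.Algebraic_Closure_Type" "HOL-Algebra.Algebra" "HOL-Library.Numeral_Type"
begin

text \<open>A homogeneous form of degree d in 5 variables is given by its coefficient
  function on exponent vectors (monomials) of total degree d.\<close>

type_synonym exps5 = "5 \<Rightarrow> nat"

definition mexp :: "nat \<Rightarrow> nat \<Rightarrow> nat \<Rightarrow> nat \<Rightarrow> nat \<Rightarrow> exps5" where
  "mexp e0 e1 e2 e3 e4 = (\<lambda>i. if i = 0 then e0 else if i = 1 then e1 else
       if i = 2 then e2 else if i = 3 then e3 else e4)"

definition hom_eval :: "nat \<Rightarrow> (exps5 \<Rightarrow> 'b::comm_ring_1) \<Rightarrow> (5 \<Rightarrow> 'b) \<Rightarrow> 'b" where
  "hom_eval d c p = (\<Sum>e\<in>{e::exps5. sum e UNIV = d}. c e * (\<Prod>i\<in>UNIV. p i ^ e i))"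

definition pderiv_coeffs :: "5 \<Rightarrow> (exps5 \<Rightarrow> 'b::comm_ring_1) \<Rightarrow> exps5 \<Rightarrow> 'b" where
  "pderiv_coeffs i c = (\<lambda>e. of_nat (e i + 1) * c (e(i := e i + 1)))"

definition smooth_hypersurface :: "nat \<Rightarrow> (exps5 \<Rightarrow> 'b::field) \<Rightarrow> bool" where
  "smooth_hypersurface d c \<longleftrightarrow>
     \<not> (\<exists>p::5 \<Rightarrow> 'b. (\<exists>i. p i \<noteq> 0) \<and> hom_eval d c p = 0 \<and>
          (\<forall>i. hom_eval (d - 1) (pderiv_coeffs i c) p = 0))"

definition matvec :: "(5 \<Rightarrow> 5 \<Rightarrow> 'b::comm_ring_1) \<Rightarrow> (5 \<Rightarrow> 'b) \<Rightarrow> (5 \<Rightarrow> 'b)" where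
  "matvec A p = (\<lambda>i. \<Sum>j\<in>UNIV. A i j * p j)"

definition matmul :: "(5 \<Rightarrow> 5 \<Rightarrow> 'b::comm_ring_1) \<Rightarrow> (5 \<Rightarrow> 5 \<Rightarrow> 'b) \<Rightarrow> (5 \<Rightarrow> 5 \<Rightarrow> 'b)" where
  "matmul A B = (\<lambda>i k. \<Sum>j\<in>UNIV. A i j * B j k)"

definition matid :: "5 \<Rightarrow> 5 \<Rightarrow> 'b::comm_ring_1" where
  "matid = (\<lambda>i j. if i = j then 1 else 0)"

definition mat_invertible :: "(5 \<Rightarrow> 5 \<Rightarrow> 'b::comm_ring_1) \<Rightarrow> bool" where
  "mat_invertible A \<longleftrightarrow> (\<exists>B. matmul A B = matid \<and> matmul B A = matid)"

definition proj_point :: "(5 \<Rightarrow> 'b::field) \<Rightarrow> (5 \<Rightarrow> 'b) set" where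
  "proj_point p = {(\<lambda>i. c * p i) | c. c \<noteq> 0}"

definition proj_space :: "(5 \<Rightarrow> 'b::field) set set" where
  "proj_space = {proj_point p | p. \<exists>i. p i \<noteq> 0}"

definition pmap :: "(5 \<Rightarrow> 5 \<Rightarrow> 'b::field) \<Rightarrow> (5 \<Rightarrow> 'b) set \<Rightarrow> (5 \<Rightarrow> 'b) set" where
  "pmap A = restrict (\<lambda>L. matvec A ` L) proj_space"

definition proj_zeros :: "nat \<Rightarrow> (exps5 \<Rightarrow> 'b::field) \<Rightarrow> (5 \<Rightarrow> 'b) set set" where
  "proj_zeros d c = {proj_point p | p. (\<exists>i. p i \<noteq> 0) \<and> hom_eval d c p = 0}"

definition lin_aut :: "nat \<Rightarrow> (exps5 \<Rightarrow> 'b::field) \<Rightarrow> ((5 \<Rightarrow> 'b) set \<Rightarrow> (5 \<Rightarrow> 'b) set) monoid" where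
  "lin_aut d c = \<lparr> carrier = {pmap A | A. mat_invertible A \<and> pmap A ` proj_zeros d c = proj_zeros d c},
                   monoid.mult = (\<lambda>f g. restrict (f \<circ> g) proj_space),
                   one = restrict id proj_space \<rparr>"

text \<open>Dihedral group of order 2n: (i,s) stands for r^i f^s.\<close>
definition dihedral :: "nat \<Rightarrow> (nat \<times> bool) monoid" where
  "dihedral n = \<lparr> carrier = {0..<n} \<times> UNIV,
      monoid.mult = (\<lambda>(i, s) (j, t). (if s then (i + n - j) mod n else (i + j) mod n, s \<noteq> t)),
      one = (0, False) \<rparr>"

definition F_coeffs :: "'b::comm_ring_1 \<Rightarrow> 'b \<Rightarrow> 'b \<Rightarrow> 'b \<Rightarrow> 'b \<Rightarrow> 'b \<Rightarrow> 'b \<Rightarrow> exps5 \<Rightarrow> 'b" where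
  "F_coeffs a1 a2 a3 a4 a5 a6 a7 = (\<lambda>e.
       (if e = mexp 3 0 0 0 0 then a1 else 0) + (if e = mexp 1 1 0 0 1 then a2 else 0)
     + (if e = mexp 1 0 1 1 0 then a3 else 0) + (if e = mexp 0 2 0 1 0 then a4 else 0)
     + (if e = mexp 0 1 2 0 0 then a5 else 0) + (if e = mexp 0 0 1 0 2 then a6 else 0)
     + (if e = mexp 0 0 0 2 1 then a7 else 0))"

text \<open>The cubic F_{a,b} in coordinates (u:v:x:y:z) = indices 0..4.\<close>
definition Fab_coeffs :: "'b::comm_ring_1 \<Rightarrow> 'b \<Rightarrow> exps5 \<Rightarrow> 'b" where
  "Fab_coeffs a b = (\<lambda>e.
       (if e = mexp 2 0 1 0 0 then 1 else 0) + (if e = mexp 1 1 0 1 0 then 2 else 0)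
     + (if e = mexp 0 2 0 0 1 then 1 else 0) + (if e = mexp 1 0 0 0 2 then 2 else 0)
     + (if e = mexp 0 1 2 0 0 then 2 else 0) + (if e = mexp 0 0 0 3 0 then a else 0)
     + (if e = mexp 0 0 1 1 1 then b else 0))"

definition Delta_ab :: "'b::comm_ring_1 \<Rightarrow> 'b \<Rightarrow> 'b" where
  "Delta_ab a b = 512 * a^2 + 27 * a^3 + 48 * a^2 * b + 128 * a * b^2 + 6 * a^2 * b^2
     + 30 * a * b^3 + a^2 * b^3 + 8 * b^4 + 2 * a * b^4 + b^5"

definition D_ab :: "'b::comm_ring_1 \<Rightarrow> 'b \<Rightarrow> 'b" where
  "D_ab a b = a * Delta_ab a b"

text \<open>alpha_X = diag(z^2, z^3, z, 1, z^4); iota_X(u:v:x:y:z) = (v:u:z:y:x).\<close>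
definition alpha_mat :: "'b::comm_ring_1 \<Rightarrow> 5 \<Rightarrow> 5 \<Rightarrow> 'b" where
  "alpha_mat \<zeta> = (\<lambda>i j. if i = j then
       (if i = 0 then \<zeta>^2 else if i = 1 then \<zeta>^3 else if i = 2 then \<zeta> else if i = 3 then 1 else \<zeta>^4)
     else 0)"

definition iota_perm :: "5 \<Rightarrow> 5" where
  "iota_perm i = (if i = 0 then 1 else if i = 1 then 0 else if i = 2 then 4 else if i = 3 then 3 else 2)"

definition iota_mat :: "5 \<Rightarrow> 5 \<Rightarrow> 'b::comm_ring_1" where
  "iota_mat = (\<lambda>i j. if j = iota_perm i then 1 else 0)"

end

theory Submission
  imports Defs
begin

text \<open>Smoothness forces \<open>a1, a4, a5, a6, a7 \<noteq> 0\<close>, since otherwise a coordinate point is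
  singular. A permutation of the coordinates followed by a diagonal scaling, which exists over the
  algebraic closure because it only requires a 15th root, then turns \<open>F\<close> into \<open>F_{a,b}\<close> (with
  \<open>b = 0\<close> when \<open>a3 = 0\<close>).

  A singular point of \<open>X_{a,b}\<close> has \<open>y \<noteq> 0\<close>; on the chart \<open>y = 1\<close> it satisfies \<open>x^5 = z^5\<close>,
  so \<open>\<alpha>\<close> moves it onto the diagonal \<open>x = z = t\<close>. There \<open>u = v = -t^2/(1+t)\<close> and the remaining
  equations say that \<open>t\<close> is a common root of the cubic \<open>P_b(t) = 3t^3 + (4-b)t^2 - 2bt - b\<close>
  and the quintic \<open>Q_a(t) = a(t+1)^2 + t^4(t+2)\<close>, unless \<open>x = z = 0\<close>, which forces \<open>a = 0\<close>.
  Since \<open>\<Delta>(a,b) = 243 Q_a(t1) Q_a(t2) Q_a(t3)\<close> over the roots \<open>ti\<close> of \<open>P_b\<close>, singular points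
  exist iff \<open>a \<Delta>(a,b) = 0\<close>.

  Finally the matrices of \<open>\<alpha>\<^sup>i \<iota>\<^sup>s\<close> are monomial, preserve \<open>F_{a,b}\<close>, multiply like the
  elements of \<open>D5\<close>, and are pairwise non-proportional when \<open>\<zeta>\<close> is primitive; so
  \<open>(i, s) \<mapsto> \<alpha>\<^sup>i \<iota>\<^sup>s\<close> embeds \<open>D5\<close> into the automorphism group.\<close>

section \<open>Cubic forms in coordinates\<close>

lemma UNIV_5: "(UNIV :: 5 set) = {0, 1, 2, 3, 4}"
  by (rule sym, rule card_subset_eq) auto

lemma distinct_5:
  "(0::5) \<noteq> 1" "(0::5) \<noteq> 2" "(0::5) \<noteq> 3" "(0::5) \<noteq> 4" "(1::5) \<noteq> 2"
  "(1::5) \<noteq> 3" "(1::5) \<noteq> 4" "(2::5) \<noteq> 3" "(2::5) \<noteq> 4" "(3::5) \<noteq> 4"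
  by simp_all

lemma sum_UNIV_5: "(\<Sum>i\<in>(UNIV :: 5 set). f i) = f 0 + (f 1 + (f 2 + (f 3 + f 4)))"
  unfolding UNIV_5 using distinct_5 by simp

lemma prod_UNIV_5: "(\<Prod>i\<in>(UNIV :: 5 set). f i) = f 0 * (f 1 * (f 2 * (f 3 * f 4)))"
  unfolding UNIV_5 using distinct_5 by simp

lemma all_5: "(\<forall>i :: 5. P i) \<longleftrightarrow> P 0 \<and> P 1 \<and> P 2 \<and> P 3 \<and> P 4"
  by (metis UNIV_5 UNIV_I empty_iff insert_iff)

lemma all_5I: "P 0 \<Longrightarrow> P 1 \<Longrightarrow> P 2 \<Longrightarrow> P 3 \<Longrightarrow> P 4 \<Longrightarrow> P (i :: 5)"
  using all_5[of P] by blast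

lemma ex_5: "(\<exists>i :: 5. P i) \<longleftrightarrow> P 0 \<or> P 1 \<or> P 2 \<or> P 3 \<or> P 4"
  using all_5[of "\<lambda>i. \<not> P i"] by blast

definition vec5 :: "'b \<Rightarrow> 'b \<Rightarrow> 'b \<Rightarrow> 'b \<Rightarrow> 'b \<Rightarrow> 5 \<Rightarrow> 'b" where
  "vec5 x0 x1 x2 x3 x4 = (\<lambda>i. if i = 0 then x0 else if i = 1 then x1 else
       if i = 2 then x2 else if i = 3 then x3 else x4)"

lemma vec5_apply [simp]:
  "vec5 x0 x1 x2 x3 x4 0 = x0" "vec5 x0 x1 x2 x3 x4 1 = x1" "vec5 x0 x1 x2 x3 x4 2 = x2"
  "vec5 x0 x1 x2 x3 x4 3 = x3" "vec5 x0 x1 x2 x3 x4 4 = x4"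
  using distinct_5 by (simp_all add: vec5_def)

lemma mexp_eq_vec5: "mexp = vec5"
  by (simp add: fun_eq_iff mexp_def vec5_def)

lemma finite_exps_of_degree: "finite {e :: exps5. sum e UNIV = d}"
proof (rule finite_subset)
  show "{e :: exps5. sum e UNIV = d} \<subseteq> PiE UNIV (\<lambda>_. {..d})"
  proof
    fix e :: exps5
    assume "e \<in> {e. sum e UNIV = d}"
    then have "e i \<le> d" for i
      using member_le_sum[of i UNIV e] by auto
    then show "e \<in> PiE UNIV (\<lambda>_. {..d})"
      by (auto simp: PiE_def extensional_def)
  qed
qed (rule finite_PiE, auto)

lemma hom_eval_add: "hom_eval d (\<lambda>e. f e + g e) p = hom_eval d f p + hom_eval d g p"
  by (simp add: hom_eval_def distrib_right sum.distrib)

lemma hom_eval_monomial: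
  "hom_eval d (\<lambda>e. if e = m then c else 0) p =
     (if sum m UNIV = d then c * (\<Prod>i\<in>UNIV. p i ^ m i) else 0)"
  unfolding hom_eval_def if_distrib if_distribR
  using finite_exps_of_degree[of d] by (simp add: sum.delta' cong: if_cong)

lemma pderiv_coeffs_add:
  "pderiv_coeffs i (\<lambda>e. f e + g e) = (\<lambda>e. pderiv_coeffs i f e + pderiv_coeffs i g e)"
  by (simp add: pderiv_coeffs_def distrib_left)

lemma hom_eval_pderiv_monomial:
  "hom_eval d (pderiv_coeffs i (\<lambda>e. if e = m then c else 0)) p =
     (if 0 < m i \<and> sum m UNIV = Suc d
      then of_nat (m i) * c * (\<Prod>j\<in>UNIV. p j ^ (m(i := m i - 1)) j) else 0)"
proof (cases "0 < m i")
  case True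
  have "e(i := e i + 1) = m \<longleftrightarrow> e = m(i := m i - 1)" for e
    using True by (auto simp: fun_eq_iff)
  then have "pderiv_coeffs i (\<lambda>e. if e = m then c else 0) =
      (\<lambda>e. if e = m(i := m i - 1) then of_nat (m i) * c else 0)"
    using True by (auto simp: pderiv_coeffs_def fun_eq_iff)
  moreover have "sum (m(i := m i - 1)) UNIV + 1 = sum m UNIV"
    using True by (simp add: sum.remove[of UNIV i] sum.cong[of "UNIV - {i}" _ "m(i := m i - 1)" m])
  ultimately show ?thesis
    using True by (auto simp: hom_eval_monomial)
next
  case False
  then have "e(i := e i + 1) \<noteq> m" for e
    by (metis fun_upd_same add_gr_0 less_numeral_extra(1))
  then show ?thesis
    using False by (simp add: pderiv_coeffs_def hom_eval_def)
qed

definition Fab :: "'b::comm_ring_1 \<Rightarrow> 'b \<Rightarrow> 'b \<Rightarrow> 'b \<Rightarrow> 'b \<Rightarrow> 'b \<Rightarrow> 'b \<Rightarrow> 'b" where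
  "Fab a b u v x y z = x*u^2 + 2*y*u*v + z*v^2 + 2*z^2*u + 2*x^2*v + a*y^3 + b*x*y*z"

lemma hom_eval_F_coeffs:
  "hom_eval 3 (F_coeffs a1 a2 a3 a4 a5 a6 a7) p =
     a1*p 0^3 + a2*p 0*p 1*p 4 + a3*p 0*p 2*p 3 + a4*p 1^2*p 3 + a5*p 1*p 2^2
     + a6*p 2*p 4^2 + a7*p 3^2*p 4"
  unfolding F_coeffs_def hom_eval_add hom_eval_monomial
  by (simp add: sum_UNIV_5 prod_UNIV_5 mexp_eq_vec5 algebra_simps power2_eq_square power3_eq_cube)

lemma hom_eval_pderiv_F_coeffs:
  "hom_eval 2 (pderiv_coeffs 0 (F_coeffs a1 a2 a3 a4 a5 a6 a7)) p = 3*a1*p 0^2 + a2*p 1*p 4 + a3*p 2*p 3"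
  "hom_eval 2 (pderiv_coeffs 1 (F_coeffs a1 a2 a3 a4 a5 a6 a7)) p = a2*p 0*p 4 + 2*a4*p 1*p 3 + a5*p 2^2"
  "hom_eval 2 (pderiv_coeffs 2 (F_coeffs a1 a2 a3 a4 a5 a6 a7)) p = a3*p 0*p 3 + 2*a5*p 1*p 2 + a6*p 4^2"
  "hom_eval 2 (pderiv_coeffs 3 (F_coeffs a1 a2 a3 a4 a5 a6 a7)) p = a3*p 0*p 2 + a4*p 1^2 + 2*a7*p 3*p 4"
  "hom_eval 2 (pderiv_coeffs 4 (F_coeffs a1 a2 a3 a4 a5 a6 a7)) p = a2*p 0*p 1 + 2*a6*p 2*p 4 + a7*p 3^2"
  unfolding F_coeffs_def pderiv_coeffs_add hom_eval_add hom_eval_pderiv_monomial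
  by (simp_all add: sum_UNIV_5 prod_UNIV_5 mexp_eq_vec5 algebra_simps power2_eq_square)

lemma hom_eval_Fab_coeffs: "hom_eval 3 (Fab_coeffs a b) p = Fab a b (p 0) (p 1) (p 2) (p 3) (p 4)"
  unfolding Fab_coeffs_def hom_eval_add hom_eval_monomial
  by (simp add: sum_UNIV_5 prod_UNIV_5 mexp_eq_vec5 Fab_def algebra_simps power2_eq_square power3_eq_cube)

lemma hom_eval_pderiv_Fab_coeffs:
  "hom_eval 2 (pderiv_coeffs 0 (Fab_coeffs a b)) p = 2*(p 2*p 0 + p 3*p 1 + p 4^2)"
  "hom_eval 2 (pderiv_coeffs 1 (Fab_coeffs a b)) p = 2*(p 3*p 0 + p 4*p 1 + p 2^2)"
  "hom_eval 2 (pderiv_coeffs 2 (Fab_coeffs a b)) p = p 0^2 + 4*p 2*p 1 + b*p 3*p 4"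
  "hom_eval 2 (pderiv_coeffs 3 (Fab_coeffs a b)) p = 2*p 0*p 1 + 3*a*p 3^2 + b*p 2*p 4"
  "hom_eval 2 (pderiv_coeffs 4 (Fab_coeffs a b)) p = p 1^2 + 4*p 4*p 0 + b*p 2*p 3"
  unfolding Fab_coeffs_def pderiv_coeffs_add hom_eval_add hom_eval_pderiv_monomial
  by (simp_all add: sum_UNIV_5 prod_UNIV_5 mexp_eq_vec5 algebra_simps power2_eq_square)

definition mono_mat :: "(5 \<Rightarrow> 5) \<Rightarrow> (5 \<Rightarrow> 'b::comm_ring_1) \<Rightarrow> 5 \<Rightarrow> 5 \<Rightarrow> 'b" where
  "mono_mat \<sigma> d = (\<lambda>i j. if j = \<sigma> i then d i else 0)"

lemma mult_if_zero_left: "(if P then a else 0) * b = (if P then a * b else (0 :: 'b::mult_zero))"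
  by simp

lemma matvec_mono_mat: "matvec (mono_mat \<sigma> d) p = (\<lambda>i. d i * p (\<sigma> i))"
  unfolding matvec_def mono_mat_def by (simp add: mult_if_zero_left sum.delta)

lemma matmul_mono_mat:
  "matmul (mono_mat \<sigma> d) (mono_mat \<tau> e) = mono_mat (\<tau> \<circ> \<sigma>) (\<lambda>i. d i * e (\<sigma> i))"
  unfolding matmul_def mono_mat_def by (intro ext) (simp add: mult_if_zero_left sum.delta)

lemma matid_eq_mono_mat: "matid = mono_mat id (\<lambda>_. 1)"
  unfolding matid_def mono_mat_def by (auto simp: fun_eq_iff)

lemma mat_invertible_mono_mat:
  fixes d :: "5 \<Rightarrow> 'b::field"
  assumes "\<And>i. \<sigma> (\<tau> i) = i" "\<And>i. \<tau> (\<sigma> i) = i" "\<And>i. d i \<noteq> 0"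
  shows "mat_invertible (mono_mat \<sigma> d)"
  unfolding mat_invertible_def
proof (intro exI conjI)
  show "matmul (mono_mat \<sigma> d) (mono_mat \<tau> (\<lambda>i. inverse (d (\<tau> i)))) = matid"
    "matmul (mono_mat \<tau> (\<lambda>i. inverse (d (\<tau> i)))) (mono_mat \<sigma> d) = matid"
    unfolding matmul_mono_mat matid_eq_mono_mat using assms by (simp_all add: comp_def id_def)
qed

section \<open>The normal form \<open>F_{a,b}\<close>\<close>

lemma smooth_F_coeffs_nonzero:
  fixes a1 a2 a3 a4 a5 a6 a7 :: "'b::field"
  assumes "smooth_hypersurface 3 (F_coeffs a1 a2 a3 a4 a5 a6 a7)"
  shows "a1 \<noteq> 0" "a4 \<noteq> 0" "a5 \<noteq> 0" "a6 \<noteq> 0" "a7 \<noteq> 0"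
proof -
  have not_singular: "\<not> (hom_eval 3 (F_coeffs a1 a2 a3 a4 a5 a6 a7) p = 0 \<and>
      (\<forall>i. hom_eval (3 - 1) (pderiv_coeffs i (F_coeffs a1 a2 a3 a4 a5 a6 a7)) p = 0))"
    if "p k = 1" for p k
    using assms that unfolding smooth_hypersurface_def by (metis one_neq_zero)
  show "a1 \<noteq> 0" "a4 \<noteq> 0" "a5 \<noteq> 0" "a6 \<noteq> 0" "a7 \<noteq> 0"
    using not_singular[of "vec5 1 0 0 0 0" 0] not_singular[of "vec5 0 1 0 0 0" 1]
      not_singular[of "vec5 0 0 1 0 0" 2] not_singular[of "vec5 0 0 0 0 1" 4]
      not_singular[of "vec5 0 0 0 1 0" 3]
    by (simp_all add: all_5 hom_eval_F_coeffs hom_eval_pderiv_F_coeffs)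
qed

text \<open>With \<open>sv = w\<close>, three of the equations determine \<open>su\<close>, \<open>sx\<close>, \<open>sz\<close> as Laurent
  monomials in \<open>w\<close>; the last one then becomes the equation \<open>w^15 = q4*q3^4/(32*q1^2*q2^8)\<close>.\<close>
lemma exists_Fab_scaling:
  fixes q1 q2 q3 q4 :: "'c::{alg_closed_field,field_char_0}"
  assumes nz: "q1 \<noteq> 0" "q2 \<noteq> 0" "q3 \<noteq> 0" "q4 \<noteq> 0"
  obtains su sv sx sz where "su \<noteq> 0" "sv \<noteq> 0" "sx \<noteq> 0" "sz \<noteq> 0"
    "q1*sx*su^2 = 1" "q2*sv^2*sz = 1" "q3*su*sz^2 = 2" "q4*sx^2*sv = 2"
proof -
  obtain w where w: "w^15 = q4*q3^4/(32*q1^2*q2^8)"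
    using nth_root_exists[of 15] by auto
  have "w \<noteq> 0"
    using w nz by (auto simp: power_0_left)
  define su sv sx sz where "su = 2*q2^2*w^4/q3" and "sv = w"
    and "sx = q3^2/(4*q1*q2^4*w^8)" and "sz = 1/(q2*w^2)"
  have "su \<noteq> 0" "sv \<noteq> 0" "sx \<noteq> 0" "sz \<noteq> 0"
    "q1*sx*su^2 = 1" "q2*sv^2*sz = 1" "q3*su*sz^2 = 2"
    unfolding su_def sv_def sx_def sz_def using nz \<open>w \<noteq> 0\<close>
    by (simp_all add: field_simps eval_nat_numeral)
  moreover have "q4*sx^2*sv = 2"
  proof -
    have "q4*sx^2*sv = q4*q3^4/(16*q1^2*q2^8*w^15)"
      unfolding sx_def sv_def using nz \<open>w \<noteq> 0\<close> by (simp add: field_simps eval_nat_numeral)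
    also have "\<dots> = 2"
      unfolding w using nz by (simp add: field_simps eval_nat_numeral)
    finally show ?thesis .
  qed
  ultimately show thesis
    by (rule that)
qed

text \<open>The substitution \<open>(x0, x1, x2, x3, x4) = (sy*y, sx*x, su*u, sv*v, sz*z)\<close>.\<close>
lemma F_coeffs_mono_mat_eq_Fab_coeffs:
  fixes a1 a2 a3 a4 a5 a6 a7 sy sx su sv sz :: "'c::field"
  assumes "a5*sx*su^2 = 1" "a3*sy*su*sv = 2" "a7*sv^2*sz = 1" "a6*su*sz^2 = 2" "a4*sx^2*sv = 2"
  shows "hom_eval 3 (F_coeffs a1 a2 a3 a4 a5 a6 a7)
           (matvec (mono_mat (vec5 3 2 0 1 4) (vec5 sy sx su sv sz)) p)
         = hom_eval 3 (Fab_coeffs (a1*sy^3) (a2*sy*sx*sz)) p"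
proof -
  have "hom_eval 3 (F_coeffs a1 a2 a3 a4 a5 a6 a7)
          (matvec (mono_mat (vec5 3 2 0 1 4) (vec5 sy sx su sv sz)) p)
      = (a1*sy^3)*p 3^3 + (a2*sy*sx*sz)*(p 2*p 3*p 4) + (a3*sy*su*sv)*(p 3*p 0*p 1)
        + (a4*sx^2*sv)*(p 2^2*p 1) + (a5*sx*su^2)*(p 2*p 0^2) + (a6*su*sz^2)*(p 0*p 4^2)
        + (a7*sv^2*sz)*(p 1^2*p 4)"
    unfolding hom_eval_F_coeffs matvec_mono_mat by (simp add: algebra_simps eval_nat_numeral)
  also have "\<dots> = hom_eval 3 (Fab_coeffs (a1*sy^3) (a2*sy*sx*sz)) p"
    unfolding assms hom_eval_Fab_coeffs Fab_def by (simp add: algebra_simps eval_nat_numeral)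
  finally show ?thesis .
qed

text \<open>The substitution \<open>(x0, x1, x2, x3, x4) = (sy*y, su*u, sz*z, sx*x, sv*v)\<close>.\<close>
lemma F_coeffs_a3_0_mono_mat_eq_Fab_coeffs:
  fixes a1 a2 a4 a5 a6 a7 sy sx su sv sz :: "'c::field"
  assumes "a4*sx*su^2 = 1" "a2*sy*su*sv = 2" "a6*sv^2*sz = 1" "a5*su*sz^2 = 2" "a7*sx^2*sv = 2"
  shows "hom_eval 3 (F_coeffs a1 a2 0 a4 a5 a6 a7)
           (matvec (mono_mat (vec5 3 0 4 2 1) (vec5 sy su sz sx sv)) p)
         = hom_eval 3 (Fab_coeffs (a1*sy^3) 0) p"
proof -
  have "hom_eval 3 (F_coeffs a1 a2 0 a4 a5 a6 a7)
          (matvec (mono_mat (vec5 3 0 4 2 1) (vec5 sy su sz sx sv)) p)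
      = (a1*sy^3)*p 3^3 + (a2*sy*su*sv)*(p 3*p 0*p 1) + (a4*sx*su^2)*(p 0^2*p 2)
        + (a5*su*sz^2)*(p 0*p 4^2) + (a6*sv^2*sz)*(p 4*p 1^2) + (a7*sx^2*sv)*(p 2^2*p 1)"
    unfolding hom_eval_F_coeffs matvec_mono_mat by (simp add: algebra_simps eval_nat_numeral)
  also have "\<dots> = hom_eval 3 (Fab_coeffs (a1*sy^3) 0) p"
    unfolding assms hom_eval_Fab_coeffs Fab_def by (simp add: algebra_simps eval_nat_numeral)
  finally show ?thesis .
qed

lemma F_coeffs_normal_form:
  fixes a1 a2 a3 a4 a5 a6 a7 :: "'c::{alg_closed_field,field_char_0}"
  assumes smooth: "smooth_hypersurface 3 (F_coeffs a1 a2 a3 a4 a5 a6 a7)"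
    and a23: "a2 \<noteq> 0 \<or> a3 \<noteq> 0"
  shows "\<exists>(A :: 5 \<Rightarrow> 5 \<Rightarrow> 'c) a b. mat_invertible A \<and>
           (\<forall>p. hom_eval 3 (F_coeffs a1 a2 a3 a4 a5 a6 a7) (matvec A p) = 0
                \<longleftrightarrow> hom_eval 3 (Fab_coeffs a b) p = 0)"
proof (cases "a3 = 0")
  case False
  obtain su sv sx sz where s: "su \<noteq> 0" "sv \<noteq> 0" "sx \<noteq> 0" "sz \<noteq> 0"
    "a5*sx*su^2 = 1" "a7*sv^2*sz = 1" "a6*su*sz^2 = 2" "a4*sx^2*sv = 2"
    using exists_Fab_scaling smooth_F_coeffs_nonzero[OF smooth] by metis
  define sy where "sy = 2/(a3*su*sv)"
  have sy: "a3*sy*su*sv = 2" "sy \<noteq> 0"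
    unfolding sy_def using s False by simp_all
  have "mat_invertible (mono_mat (vec5 3 2 0 1 4) (vec5 sy sx su sv sz))"
    by (rule mat_invertible_mono_mat[where \<tau> = "vec5 2 3 1 0 4"]; rule all_5I) (simp_all add: s sy)
  with F_coeffs_mono_mat_eq_Fab_coeffs[OF s(5) sy(1) s(6) s(7) s(8)] show ?thesis
    by metis
next
  case True
  with a23 have "a2 \<noteq> 0"
    by simp
  obtain su sv sx sz where s: "su \<noteq> 0" "sv \<noteq> 0" "sx \<noteq> 0" "sz \<noteq> 0"
    "a4*sx*su^2 = 1" "a6*sv^2*sz = 1" "a5*su*sz^2 = 2" "a7*sx^2*sv = 2"
    using exists_Fab_scaling smooth_F_coeffs_nonzero[OF smooth] by metis
  define sy where "sy = 2/(a2*su*sv)"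
  have sy: "a2*sy*su*sv = 2" "sy \<noteq> 0"
    unfolding sy_def using s \<open>a2 \<noteq> 0\<close> by simp_all
  have "mat_invertible (mono_mat (vec5 3 0 4 2 1) (vec5 sy su sz sx sv))"
    by (rule mat_invertible_mono_mat[where \<tau> = "vec5 1 4 3 0 2"]; rule all_5I) (simp_all add: s sy)
  with F_coeffs_a3_0_mono_mat_eq_Fab_coeffs[OF s(5) sy(1) s(6) s(7) s(8)] show ?thesis
    unfolding True by metis
qed

section \<open>Smoothness of \<open>X_{a,b}\<close>\<close>

definition cubic_P :: "'c::comm_ring_1 \<Rightarrow> 'c \<Rightarrow> 'c" where
  "cubic_P b t = 3*t^3 + (4 - b)*t^2 - 2*b*t - b"

definition quintic_Q :: "'c::comm_ring_1 \<Rightarrow> 'c \<Rightarrow> 'c" where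
  "quintic_Q a t = (t + 1)^2*a + t^4*(t + 2)"

lemma quadratic_has_root:
  fixes c2 c1 c0 :: "'c::alg_closed_field"
  assumes "c2 \<noteq> 0"
  shows "\<exists>x. c2*x^2 + c1*x + c0 = 0"
  using alg_closed_imp_poly_has_root[of "[:c0, c1, c2:]"] assms
  by (simp add: algebra_simps power2_eq_square)

lemma cubic_has_root:
  fixes c3 c2 c1 c0 :: "'c::alg_closed_field"
  assumes "c3 \<noteq> 0"
  shows "\<exists>x. c3*x^3 + c2*x^2 + c1*x + c0 = 0"
  using alg_closed_imp_poly_has_root[of "[:c0, c1, c2, c3:]"] assms
  by (simp add: algebra_simps power2_eq_square power3_eq_cube)

lemma cubic_P_eq_prod_roots:
  assumes "3*(t1 + t2 + t3) = b - 4" "3*(t1*t2 + t1*t3 + t2*t3) = -2*b" "3*(t1*t2*t3) = b"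
  shows "cubic_P b t = 3*(t - t1)*(t - t2)*(t - t3)"
proof -
  have "3*(t - t1)*(t - t2)*(t - t3) = 3*t^3 - 3*(t1 + t2 + t3)*t^2
      + 3*(t1*t2 + t1*t3 + t2*t3)*t - 3*(t1*t2*t3)"
    by (simp add: algebra_simps eval_nat_numeral)
  then show ?thesis
    unfolding assms cubic_P_def by (simp add: algebra_simps)
qed

lemma cubic_P_roots:
  fixes b t1 :: "'c::{alg_closed_field,field_char_0}"
  assumes "cubic_P b t1 = 0"
  obtains t2 t3 where "3*(t1 + t2 + t3) = b - 4" "3*(t1*t2 + t1*t3 + t2*t3) = -2*b"
    "3*(t1*t2*t3) = b"
proof -
  define \<beta> \<gamma> where "\<beta> = 3*t1 + 4 - b" and "\<gamma> = 3*t1^2 + (4 - b)*t1 - 2*b"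
  obtain t2 where t2: "3*t2^2 + \<beta>*t2 + \<gamma> = 0"
    using quadratic_has_root[of "3::'c"] by auto
  define t3 where "t3 = -\<beta>/3 - t2"
  have sum23: "3*(t2 + t3) = -\<beta>"
    unfolding t3_def by (simp add: field_simps)
  have "3*(t2*t3) = -(3*t2^2 + \<beta>*t2)"
    unfolding t3_def by (simp add: field_simps power2_eq_square)
  also have "\<dots> = \<gamma>"
    using t2 add_eq_0_iff by metis
  finally have prod23: "3*(t2*t3) = \<gamma>" .
  show thesis
  proof
    show "3*(t1 + t2 + t3) = b - 4"
      using sum23 unfolding \<beta>_def by (simp add: algebra_simps)
    have "3*(t1*t2 + t1*t3 + t2*t3) = t1*(3*(t2 + t3)) + 3*(t2*t3)"
      by (simp add: algebra_simps)
    then show "3*(t1*t2 + t1*t3 + t2*t3) = -2*b"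
      unfolding sum23 prod23 \<beta>_def \<gamma>_def by (simp add: algebra_simps power2_eq_square)
    have "3*(t1*t2*t3) = t1*(3*(t2*t3))"
      by (simp add: algebra_simps)
    also have "\<dots> = cubic_P b t1 + b"
      unfolding prod23 \<gamma>_def cubic_P_def by (simp add: algebra_simps eval_nat_numeral)
    finally show "3*(t1*t2*t3) = b"
      using assms by simp
  qed
qed

text \<open>The symmetric functions enter multiplied by 3, matching the Vieta relations of \<open>cubic_P\<close>
  and keeping the identity free of division.\<close>
lemma prod_quadratic_symmetric:
  fixes k0 k1 k2 t1 t2 t3 :: "'c::comm_ring_1"
  assumes "E1 = 3*(t1 + t2 + t3)" "E2 = 3*(t1*t2 + t1*t3 + t2*t3)" "E3 = 3*(t1*t2*t3)"
  shows "9*((k2*t1^2 + k1*t1 + k0)*(k2*t2^2 + k1*t2 + k0)*(k2*t3^2 + k1*t3 + k0)) =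
    9*k0^3 + 3*k0^2*k1*E1 + k0^2*k2*E1^2 - 6*k0^2*k2*E2 + 3*k0*k1^2*E2 + k0*k1*k2*E1*E2
    - 9*k0*k1*k2*E3 - 2*k0*k2^2*E1*E3 + k0*k2^2*E2^2 + 3*k1^3*E3 + k1^2*k2*E1*E3
    + k1*k2^2*E2*E3 + k2^3*E3^2"
  unfolding assms by (simp add: algebra_simps eval_nat_numeral)

lemma quintic_Q_mod_cubic_P:
  fixes a b t :: "'c::comm_ring_1"
  shows
  "27*quintic_Q a t = (27*a + b^3 + 6*b^2 - 3*b + 32)*t^2 + (54*a + 2*b^3 + 11*b^2 - 10*b)*t
     + (27*a + b^3 + 4*b^2 - 8*b) + (b^2 + 3*b*t + 4*b + 9*t^2 + 6*t - 8) * cubic_P b t"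
  unfolding quintic_Q_def cubic_P_def by (simp add: algebra_simps eval_nat_numeral)

text \<open>Up to the factor 243, \<open>Delta_ab a b\<close> is the resultant of \<open>cubic_P b\<close> and
  \<open>quintic_Q a\<close>.\<close>
lemma Delta_ab_eq_prod_quintic_Q:
  fixes a b t1 t2 t3 :: "'c::field_char_0"
  assumes vieta: "3*(t1 + t2 + t3) = b - 4" "3*(t1*t2 + t1*t3 + t2*t3) = -2*b" "3*(t1*t2*t3) = b"
  shows "Delta_ab a b = 243*(quintic_Q a t1*quintic_Q a t2*quintic_Q a t3)"
proof -
  define k2 k1 k0 where "k2 = 27*a + b^3 + 6*b^2 - 3*b + 32"
    and "k1 = 54*a + 2*b^3 + 11*b^2 - 10*b" and "k0 = 27*a + b^3 + 4*b^2 - 8*b"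
  have root: "cubic_P b t = 0" if "t \<in> {t1, t2, t3}" for t
    using that cubic_P_eq_prod_roots[OF vieta] by auto
  have "27*quintic_Q a t = k2*t^2 + k1*t + k0" if "t \<in> {t1, t2, t3}" for t
    using quintic_Q_mod_cubic_P[of a t b] root[OF that] unfolding k2_def k1_def k0_def by simp
  then have "9*((27*quintic_Q a t1)*(27*quintic_Q a t2)*(27*quintic_Q a t3)) =
    9*k0^3 + 3*k0^2*k1*(b-4) + k0^2*k2*(b-4)^2 - 6*k0^2*k2*(-2*b) + 3*k0*k1^2*(-2*b)
    + k0*k1*k2*(b-4)*(-2*b) - 9*k0*k1*k2*b - 2*k0*k2^2*(b-4)*b + k0*k2^2*(-2*b)^2 + 3*k1^3*b
    + k1^2*k2*(b-4)*b + k1*k2^2*(-2*b)*b + k2^3*b^2"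
    using prod_quadratic_symmetric[OF vieta[symmetric], of k2 k1 k0] by simp
  also have "\<dots> = 729*Delta_ab a b"
    unfolding k2_def k1_def k0_def Delta_ab_def by (simp add: algebra_simps eval_nat_numeral)
  finally show ?thesis
    by (simp add: algebra_simps)
qed

lemma Delta_ab_eq_0_iff_common_root:
  fixes a b :: "'c::{alg_closed_field,field_char_0}"
  shows "Delta_ab a b = 0 \<longleftrightarrow> (\<exists>t. cubic_P b t = 0 \<and> quintic_Q a t = 0)"
proof
  assume "Delta_ab a b = 0"
  obtain t1 where t1: "cubic_P b t1 = 0"
    using cubic_has_root[of "3::'c" "4 - b" "-2*b" "-b"] unfolding cubic_P_def
    by (auto simp: algebra_simps)
  then obtain t2 t3 where vieta: "3*(t1 + t2 + t3) = b - 4" "3*(t1*t2 + t1*t3 + t2*t3) = -2*b"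
    "3*(t1*t2*t3) = b"
    by (rule cubic_P_roots)
  have "quintic_Q a t1 = 0 \<or> quintic_Q a t2 = 0 \<or> quintic_Q a t3 = 0"
    using Delta_ab_eq_prod_quintic_Q[OF vieta, of a] \<open>Delta_ab a b = 0\<close> by simp
  then show "\<exists>t. cubic_P b t = 0 \<and> quintic_Q a t = 0"
    using cubic_P_eq_prod_roots[OF vieta] by fastforce
next
  assume "\<exists>t. cubic_P b t = 0 \<and> quintic_Q a t = 0"
  then obtain t1 where t1: "cubic_P b t1 = 0" "quintic_Q a t1 = 0"
    by blast
  obtain t2 t3 where "3*(t1 + t2 + t3) = b - 4" "3*(t1*t2 + t1*t3 + t2*t3) = -2*b"
    "3*(t1*t2*t3) = b"
    using cubic_P_roots[OF t1(1)] by blast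
  then show "Delta_ab a b = 0"
    using Delta_ab_eq_prod_quintic_Q t1(2) by fastforce
qed

text \<open>The equations of the critical locus are the partial derivatives of \<open>Fab\<close>, those with
  respect to \<open>u\<close> and \<open>v\<close> divided by 2.\<close>
definition Fab_critical :: "'c::comm_ring_1 \<Rightarrow> 'c \<Rightarrow> 'c \<Rightarrow> 'c \<Rightarrow> 'c \<Rightarrow> 'c \<Rightarrow> 'c \<Rightarrow> bool" where
  "Fab_critical a b u v x y z \<longleftrightarrow>
     x*u + y*v + z^2 = 0 \<and> y*u + z*v + x^2 = 0 \<and> u^2 + 4*x*v + b*y*z = 0 \<and>
     2*u*v + 3*a*y^2 + b*x*z = 0 \<and> v^2 + 4*z*u + b*x*y = 0"

lemma Fab_euler:
  "3*Fab a b u v x y z = u*(2*(x*u + y*v + z^2)) + v*(2*(y*u + z*v + x^2))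
     + x*(u^2 + 4*x*v + b*y*z) + y*(2*u*v + 3*a*y^2 + b*x*z) + z*(v^2 + 4*z*u + b*x*y)"
  unfolding Fab_def by (simp add: algebra_simps eval_nat_numeral)

lemma Fab_singular_point_iff:
  fixes a b :: "'c::field_char_0"
  shows "(\<exists>p :: 5 \<Rightarrow> 'c. (\<exists>i. p i \<noteq> 0) \<and> hom_eval 3 (Fab_coeffs a b) p = 0 \<and>
            (\<forall>i. hom_eval (3 - 1) (pderiv_coeffs i (Fab_coeffs a b)) p = 0))
    \<longleftrightarrow> (\<exists>u v x y z. \<not> (u = 0 \<and> v = 0 \<and> x = 0 \<and> y = 0 \<and> z = 0) \<and>
          Fab_critical a b u v x y z)"
proof
  assume "\<exists>p :: 5 \<Rightarrow> 'c. (\<exists>i. p i \<noteq> 0) \<and> hom_eval 3 (Fab_coeffs a b) p = 0 \<and>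
            (\<forall>i. hom_eval (3 - 1) (pderiv_coeffs i (Fab_coeffs a b)) p = 0)"
  then obtain p :: "5 \<Rightarrow> 'c" where "\<exists>i. p i \<noteq> 0"
    and "\<forall>i. hom_eval 2 (pderiv_coeffs i (Fab_coeffs a b)) p = 0"
    by auto
  then have "p 2*p 0 + p 3*p 1 + p 4^2 = 0 \<and> p 3*p 0 + p 4*p 1 + p 2^2 = 0
      \<and> p 0^2 + 4*p 2*p 1 + b*p 3*p 4 = 0 \<and> 2*p 0*p 1 + 3*a*p 3^2 + b*p 2*p 4 = 0
      \<and> p 1^2 + 4*p 4*p 0 + b*p 2*p 3 = 0"
    unfolding all_5 hom_eval_pderiv_Fab_coeffs mult_eq_0_iff by simp
  with \<open>\<exists>i. p i \<noteq> 0\<close> have "\<not> (p 0 = 0 \<and> p 1 = 0 \<and> p 2 = 0 \<and> p 3 = 0 \<and> p 4 = 0)"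
    "Fab_critical a b (p 0) (p 1) (p 2) (p 3) (p 4)"
    by (auto simp: ex_5 Fab_critical_def algebra_simps)
  then show "\<exists>u v x y z. \<not> (u = 0 \<and> v = 0 \<and> x = 0 \<and> y = 0 \<and> z = 0) \<and> Fab_critical a b u v x y z"
    by blast
next
  assume "\<exists>u v x y z. \<not> (u = 0 \<and> v = 0 \<and> x = 0 \<and> y = 0 \<and> z = 0) \<and> Fab_critical a b u v x y z"
  then obtain u v x y z where "\<not> (u = 0 \<and> v = 0 \<and> x = 0 \<and> y = 0 \<and> z = 0)"
    and crit: "Fab_critical a b u v x y z"
    by blast
  moreover have "Fab a b u v x y z = 0"
    using Fab_euler[of a b u v x y z] crit unfolding Fab_critical_def by simp
  ultimately show "\<exists>p :: 5 \<Rightarrow> 'c. (\<exists>i. p i \<noteq> 0) \<and> hom_eval 3 (Fab_coeffs a b) p = 0 \<and>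
            (\<forall>i. hom_eval (3 - 1) (pderiv_coeffs i (Fab_coeffs a b)) p = 0)"
    by (intro exI[of _ "vec5 u v x y z"])
      (auto simp: ex_5 all_5 hom_eval_Fab_coeffs hom_eval_pderiv_Fab_coeffs Fab_critical_def
        algebra_simps)
qed

lemma Fab_critical_y_0:
  fixes u v x z :: "'c::field_char_0"
  assumes "Fab_critical a b u v x 0 z"
  shows "u = 0 \<and> v = 0 \<and> x = 0 \<and> z = 0"
proof -
  have E0: "x*u + z^2 = 0" and E1: "z*v + x^2 = 0" and E2: "u^2 + 4*x*v = 0"
    and E4: "v^2 + 4*z*u = 0"
    using assms by (auto simp: Fab_critical_def)
  have "z^5 - 4*x^5 = z*x^2*(u^2 + 4*x*v) - z*(x*u + z^2)*(x*u - z^2) - 4*x^3*(z*v + x^2)"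
    "x^5 - 4*z^5 = x*z^2*(v^2 + 4*z*u) - x*(z*v + x^2)*(z*v - x^2) - 4*z^3*(x*u + z^2)"
    by (simp_all add: algebra_simps eval_nat_numeral)
  then have "z^5 = 4*x^5" "x^5 = 4*z^5"
    using E0 E1 E2 E4 by simp_all
  then have "x = 0"
    by simp
  with E0 E2 E4 show ?thesis
    by simp
qed

lemma Fab_critical_scale:
  fixes y :: "'c::field"
  assumes "y \<noteq> 0" "Fab_critical a b u v x y z"
  shows "Fab_critical a b (u/y) (v/y) (x/y) 1 (z/y)"
  using assms unfolding Fab_critical_def by (simp add: field_simps power2_eq_square)

lemma Fab_critical_alpha:
  fixes s :: "'c::comm_ring_1"
  assumes s: "s^5 = 1" and crit: "Fab_critical a b u v x y z"
  shows "Fab_critical a b (s^2*u) (s^3*v) (s*x) y (s^4*z)"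
proof -
  have "s^8 = s^5*s^3" "s^7 = s^5*s^2" "s^6 = s^5*s"
    by (simp_all add: eval_nat_numeral)
  then have s8: "s^8 = s^3" and s7: "s^7 = s^2" and s6: "s^6 = s"
    using s by simp_all
  have "(s*x)*(s^2*u) + y*(s^3*v) + (s^4*z)^2 = s^3*(x*u) + s^3*(y*v) + s^8*z^2"
    by (simp add: algebra_simps eval_nat_numeral)
  also have "\<dots> = s^3*(x*u + y*v + z^2)"
    using s8 by (simp add: algebra_simps)
  finally have 1: "(s*x)*(s^2*u) + y*(s^3*v) + (s^4*z)^2 = s^3*(x*u + y*v + z^2)" .
  have "y*(s^2*u) + (s^4*z)*(s^3*v) + (s*x)^2 = s^2*(y*u) + s^7*(z*v) + s^2*x^2"
    by (simp add: algebra_simps eval_nat_numeral)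
  also have "\<dots> = s^2*(y*u + z*v + x^2)"
    using s7 by (simp add: algebra_simps)
  finally have 2: "y*(s^2*u) + (s^4*z)*(s^3*v) + (s*x)^2 = s^2*(y*u + z*v + x^2)" .
  have 3: "(s^2*u)^2 + 4*(s*x)*(s^3*v) + b*y*(s^4*z) = s^4*(u^2 + 4*x*v + b*y*z)"
    by (simp add: algebra_simps eval_nat_numeral)
  have "2*(s^2*u)*(s^3*v) + 3*a*y^2 + b*(s*x)*(s^4*z) = s^5*(2*u*v) + 3*a*y^2 + s^5*(b*x*z)"
    by (simp add: algebra_simps eval_nat_numeral)
  also have "\<dots> = 2*u*v + 3*a*y^2 + b*x*z"
    using s by (simp add: algebra_simps)
  finally have 4: "2*(s^2*u)*(s^3*v) + 3*a*y^2 + b*(s*x)*(s^4*z) = 2*u*v + 3*a*y^2 + b*x*z" .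
  have "(s^3*v)^2 + 4*(s^4*z)*(s^2*u) + b*(s*x)*y = s^6*v^2 + s^6*(4*z*u) + s*(b*x*y)"
    by (simp add: algebra_simps eval_nat_numeral)
  also have "\<dots> = s*(v^2 + 4*z*u + b*x*y)"
    using s6 by (simp add: algebra_simps)
  finally have 5: "(s^3*v)^2 + 4*(s^4*z)*(s^2*u) + b*(s*x)*y = s*(v^2 + 4*z*u + b*x*y)" .
  show ?thesis
    using 1 2 3 4 5 crit unfolding Fab_critical_def by simp
qed

lemma Fab_critical_diagonal:
  fixes a b u v t :: "'c::{alg_closed_field,field_char_0}"
  assumes crit: "Fab_critical a b u v t 1 t" and "t \<noteq> 0"
  shows "Delta_ab a b = 0"
proof -
  have E0: "t*u + v + t^2 = 0" and E1: "u + t*v + t^2 = 0" and E2: "u^2 + 4*t*v + b*t = 0"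
    and E3: "2*u*v + 3*a + b*t*t = 0" and E4: "v^2 + 4*t*u + b*t = 0"
    using crit by (auto simp: Fab_critical_def)
  have "u = v"
  proof (cases "t = 1")
    case True
    have "(u - v)*(u + v - 4) = (u^2 + 4*t*v + b*t) - (v^2 + 4*t*u + b*t)"
      using True by (simp add: algebra_simps power2_eq_square)
    then have "(u - v)*(u + v - 4) = 0"
      using E2 E4 by simp
    moreover have "1 + (u + v) = 0"
      using E0 True by (simp add: algebra_simps)
    moreover have "u + v - 4 = (1 + (u + v)) - 5"
      by (simp add: algebra_simps)
    ultimately show ?thesis
      by auto
  next
    case False
    have "(t - 1)*(u - v) = (t*u + v + t^2) - (u + t*v + t^2)"
      by (simp add: algebra_simps)
    then show ?thesis
      using E0 E1 False by simp
  qed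
  have u: "u*(1 + t) = -(t^2)"
    using E1 \<open>u = v\<close> by (simp add: algebra_simps eq_neg_iff_add_eq_0)
  have P: "cubic_P b t = 0"
  proof -
    have "t * cubic_P b t = -((u*(1 + t))^2 + 4*t*(u*(1 + t))*(1 + t) + b*t*(1 + t)^2)"
      unfolding u cubic_P_def by (simp add: algebra_simps eval_nat_numeral)
    also have "\<dots> = -((u^2 + 4*t*v + b*t)*(1 + t)^2)"
      using \<open>u = v\<close> by (simp add: algebra_simps eval_nat_numeral)
    finally show ?thesis
      using E2 \<open>t \<noteq> 0\<close> by simp
  qed
  have "b*(1 + t)^2 = 3*t^3 + 4*t^2"
    using P unfolding cubic_P_def by (simp add: algebra_simps eval_nat_numeral)
  then have "3*quintic_Q a t = 2*(u*(1 + t))^2 + 3*a*(1 + t)^2 + t^2*(b*(1 + t)^2)"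
    unfolding u quintic_Q_def by (simp add: algebra_simps eval_nat_numeral)
  also have "\<dots> = (2*u*v + 3*a + b*t*t)*(1 + t)^2"
    using \<open>u = v\<close> by (simp add: algebra_simps eval_nat_numeral)
  finally have "quintic_Q a t = 0"
    using E3 by simp
  with P show ?thesis
    using Delta_ab_eq_0_iff_common_root by blast
qed

text \<open>The first two equations give \<open>u*d\<close> and \<open>v*d\<close> for \<open>d = 1 - x*z\<close>; inserting them
  into a combination of the third and fifth equation leaves \<open>5*(x^5 - z^5)*d = 0\<close>.\<close>
lemma Fab_critical_y_1_fifth_powers:
  fixes u v x z :: "'c::field_char_0"
  assumes "Fab_critical a b u v x 1 z"
  shows "x^5 = z^5"
proof -
  have E0: "x*u + v + z^2 = 0" and E1: "u + z*v + x^2 = 0" and E2: "u^2 + 4*x*v + b*z = 0"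
    and E4: "v^2 + 4*z*u + b*x = 0"
    using assms by (auto simp: Fab_critical_def)
  define d where "d = 1 - x*z"
  have "u*d - (z^3 - x^2) = (u + z*v + x^2) - z*(x*u + v + z^2)"
    unfolding d_def by (simp add: algebra_simps eval_nat_numeral)
  then have ud: "u*d = z^3 - x^2"
    using E0 E1 by simp
  have "v*d - (x^3 - z^2) = (x*u + v + z^2) - x*(u + z*v + x^2)"
    unfolding d_def by (simp add: algebra_simps eval_nat_numeral)
  then have vd: "v*d = x^3 - z^2"
    using E0 E1 by simp
  have "x*u^2 + 4*x^2*v - z*v^2 - 4*z^2*u = x*(u^2 + 4*x*v + b*z) - z*(v^2 + 4*z*u + b*x)"
    by (simp add: algebra_simps eval_nat_numeral)
  then have G: "x*u^2 + 4*x^2*v - z*v^2 - 4*z^2*u = 0"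
    using E2 E4 by simp
  show ?thesis
  proof (cases "d = 0")
    case True
    then have "z^3 = x^2" "x^3 = z^2"
      using ud vd by simp_all
    then have "x^5 = x^2*x^3" "z^5 = z^2*z^3"
      by (simp_all add: eval_nat_numeral)
    then show ?thesis
      using \<open>z^3 = x^2\<close> \<open>x^3 = z^2\<close> by (simp add: mult.commute)
  next
    case False
    have "d^2*(x*u^2 + 4*x^2*v - z*v^2 - 4*z^2*u)
        = x*(u*d)^2 + 4*x^2*d*(v*d) - z*(v*d)^2 - 4*z^2*d*(u*d)"
      by (simp add: algebra_simps eval_nat_numeral)
    also have "\<dots> = x*(z^3 - x^2)^2 + 4*x^2*d*(x^3 - z^2) - z*(x^3 - z^2)^2 - 4*z^2*d*(z^3 - x^2)"
      by (simp only: ud vd)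
    also have "\<dots> = 5*(x^5 - z^5)*d"
      unfolding d_def by (simp add: algebra_simps eval_nat_numeral)
    finally show ?thesis
      using G False by simp
  qed
qed

text \<open>For \<open>x \<noteq> 0\<close>, the symmetry \<open>Fab_critical_alpha\<close> with \<open>s = (z/x)^3\<close> moves the point
  onto the diagonal \<open>x = z\<close>.\<close>
lemma Fab_critical_y_1:
  fixes a b u v x z :: "'c::{alg_closed_field,field_char_0}"
  assumes crit: "Fab_critical a b u v x 1 z"
  shows "a = 0 \<or> Delta_ab a b = 0"
proof (cases "x = 0")
  case True
  then have "z = 0"
    using Fab_critical_y_1_fifth_powers[OF crit] by simp
  with True crit show ?thesis
    unfolding Fab_critical_def by auto
next
  case False
  define w where "w = z/x"
  have z: "z = w*x"
    using False unfolding w_def by simp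
  have w5: "w^5 = 1"
    using Fab_critical_y_1_fifth_powers[OF crit] False unfolding z by (simp add: power_mult_distrib)
  define s where "s = w^3"
  have s5: "s^5 = 1"
    unfolding s_def using w5 by (metis power_mult power_one mult.commute)
  have "s^4*z = w^13*x"
    unfolding s_def z by (simp add: algebra_simps flip: power_mult power_Suc)
  also have "w^13 = w^3*(w^5)^2"
    by (simp flip: power_mult power_add)
  finally have "s^4*z = s*x"
    unfolding w5 s_def by simp
  then have "Fab_critical a b (s^2*u) (s^3*v) (s*x) 1 (s*x)"
    using Fab_critical_alpha[OF s5 crit] by simp
  moreover have "s*x \<noteq> 0"
    using s5 False by (metis mult_eq_0_iff zero_neq_one zero_power zero_less_numeral)
  ultimately show ?thesis
    using Fab_critical_diagonal by blast
qed

lemma Fab_critical_of_common_root: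
  fixes a b t :: "'c::field_char_0"
  assumes P: "cubic_P b t = 0" and Q: "quintic_Q a t = 0"
  shows "Fab_critical a b (-(t^2)) (-(t^2)) (t*(1 + t)) (1 + t) (t*(1 + t))"
proof -
  have "(t*(1 + t))*(-(t^2)) + (1 + t)*(-(t^2)) + (t*(1 + t))^2 = 0"
    by (simp add: algebra_simps eval_nat_numeral)
  moreover have "(-(t^2))^2 + 4*(t*(1 + t))*(-(t^2)) + b*(1 + t)*(t*(1 + t)) = -(t * cubic_P b t)"
    unfolding cubic_P_def by (simp add: algebra_simps eval_nat_numeral)
  moreover have "2*(-(t^2))*(-(t^2)) + 3*a*(1 + t)^2 + b*(t*(1 + t))*(t*(1 + t))
      = 3*quintic_Q a t - t^2 * cubic_P b t"
    unfolding cubic_P_def quintic_Q_def by (simp add: algebra_simps eval_nat_numeral)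
  ultimately show ?thesis
    unfolding Fab_critical_def using P Q by (simp add: algebra_simps)
qed

lemma Fab_has_critical_point_iff:
  fixes a b :: "'c::{alg_closed_field,field_char_0}"
  shows "(\<exists>u v x y z. \<not> (u = 0 \<and> v = 0 \<and> x = 0 \<and> y = 0 \<and> z = 0) \<and> Fab_critical a b u v x y z)
    \<longleftrightarrow> D_ab a b = 0"
proof
  assume "\<exists>u v x y z. \<not> (u = 0 \<and> v = 0 \<and> x = 0 \<and> y = 0 \<and> z = 0) \<and> Fab_critical a b u v x y z"
  then obtain u v x y z where nz: "\<not> (u = 0 \<and> v = 0 \<and> x = 0 \<and> y = 0 \<and> z = 0)"
    and crit: "Fab_critical a b u v x y z"
    by blast
  have "y \<noteq> 0"
  proof
    assume "y = 0"
    then show False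
      using Fab_critical_y_0[of a b u v x z] crit nz by simp
  qed
  then have "Fab_critical a b (u/y) (v/y) (x/y) 1 (z/y)"
    using crit by (rule Fab_critical_scale)
  then have "a = 0 \<or> Delta_ab a b = 0"
    by (rule Fab_critical_y_1)
  then show "D_ab a b = 0"
    unfolding D_ab_def by auto
next
  assume "D_ab a b = 0"
  then consider "a = 0" | "Delta_ab a b = 0"
    unfolding D_ab_def by auto
  then show "\<exists>u v x y z. \<not> (u = 0 \<and> v = 0 \<and> x = 0 \<and> y = 0 \<and> z = 0) \<and> Fab_critical a b u v x y z"
  proof cases
    case 1
    then have "Fab_critical a b 0 0 0 1 0"
      unfolding Fab_critical_def by simp
    then show ?thesis
      by (intro exI[of _ 0] exI[of _ 1]) simp
  next
    case 2
    then obtain t where P: "cubic_P b t = 0" and Q: "quintic_Q a t = 0"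
      using Delta_ab_eq_0_iff_common_root by blast
    have "1 + t \<noteq> 0"
    proof
      assume "1 + t = 0"
      then have "t = -1"
        by (simp add: eq_neg_iff_add_eq_0 add.commute)
      then show False
        using P unfolding cubic_P_def by simp
    qed
    with Fab_critical_of_common_root[OF P Q] show ?thesis
      by blast
  qed
qed

lemma smooth_Fab_coeffs_iff:
  fixes a b :: "'c::{alg_closed_field,field_char_0}"
  shows "smooth_hypersurface 3 (Fab_coeffs a b) \<longleftrightarrow> D_ab a b \<noteq> 0"
  unfolding smooth_hypersurface_def Fab_singular_point_iff Fab_has_critical_point_iff ..

section \<open>Projective linear automorphisms\<close>

lemma matvec_smult: "matvec A (\<lambda>i. c * p i) = (\<lambda>i. c * matvec A p i)"
  unfolding matvec_def by (simp add: sum_distrib_left algebra_simps)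

lemma matvec_matmul: "matvec (matmul A B) p = matvec A (matvec B p)"
proof (rule ext)
  fix i
  have "matvec (matmul A B) p i = (\<Sum>j\<in>UNIV. \<Sum>k\<in>UNIV. A i k * B k j * p j)"
    unfolding matvec_def matmul_def by (simp add: sum_distrib_right)
  also have "\<dots> = (\<Sum>k\<in>UNIV. \<Sum>j\<in>UNIV. A i k * B k j * p j)"
    by (rule sum.swap)
  also have "\<dots> = matvec A (matvec B p) i"
    unfolding matvec_def by (simp add: sum_distrib_left mult.assoc)
  finally show "matvec (matmul A B) p i = matvec A (matvec B p) i" .
qed

lemma matmul_assoc: "matmul (matmul A B) C = matmul A (matmul B C)"
proof (intro ext)
  fix i l
  have "matmul (matmul A B) C i l = (\<Sum>j\<in>UNIV. \<Sum>k\<in>UNIV. A i k * B k j * C j l)"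
    unfolding matmul_def by (simp add: sum_distrib_right)
  also have "\<dots> = (\<Sum>k\<in>UNIV. \<Sum>j\<in>UNIV. A i k * B k j * C j l)"
    by (rule sum.swap)
  also have "\<dots> = matmul A (matmul B C) i l"
    unfolding matmul_def by (simp add: sum_distrib_left mult.assoc)
  finally show "matmul (matmul A B) C i l = matmul A (matmul B C) i l" .
qed

lemma matvec_matid [simp]: "matvec matid = (\<lambda>p. p)"
  unfolding matvec_def matid_def by (simp add: mult_if_zero_left sum.delta')

lemma matmul_matid [simp]: "matmul matid A = A" "matmul A matid = A"
  unfolding matmul_def matid_def
  by (simp_all add: mult_if_zero_left if_distrib[of "times _"] sum.delta' sum.delta cong: if_cong)

lemma mat_invertible_matid: "mat_invertible matid"
  unfolding mat_invertible_def by auto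

lemma mat_invertible_matmul:
  assumes "mat_invertible A" "mat_invertible B"
  shows "mat_invertible (matmul A B)"
proof -
  obtain A' B' where A': "matmul A A' = matid" "matmul A' A = matid"
    and B': "matmul B B' = matid" "matmul B' B = matid"
    using assms unfolding mat_invertible_def by blast
  have "matmul (matmul A B) (matmul B' A') = matmul A (matmul (matmul B B') A')"
    "matmul (matmul B' A') (matmul A B) = matmul B' (matmul (matmul A' A) B)"
    by (simp_all only: matmul_assoc)
  then show ?thesis
    unfolding mat_invertible_def A' B' matmul_matid by blast
qed

lemma matvec_nonzero:
  assumes "matmul B A = matid" "\<exists>i. p i \<noteq> 0"
  shows "\<exists>i. matvec A p i \<noteq> 0"
proof (rule ccontr)
  assume "\<not> (\<exists>i. matvec A p i \<noteq> 0)"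
  then have "matvec A p = (\<lambda>i. 0 * p i)"
    by auto
  then have "p = (\<lambda>i. 0)"
    using matvec_matmul[of B A p] matvec_smult[of B 0 p] assms(1) by simp
  with assms(2) show False
    by simp
qed

lemma proj_point_in_proj_space: "\<exists>i. p i \<noteq> 0 \<Longrightarrow> proj_point p \<in> proj_space"
  unfolding proj_space_def by blast

lemma proj_spaceE:
  assumes "L \<in> proj_space"
  obtains p where "\<exists>i. p i \<noteq> 0" "L = proj_point p"
  using assms unfolding proj_space_def by blast

lemma proj_point_eq_imp_smult:
  fixes p q :: "5 \<Rightarrow> 'b::field"
  assumes "proj_point p = proj_point q"
  shows "\<exists>c. c \<noteq> 0 \<and> p = (\<lambda>i. c * q i)"
proof -
  have "p \<in> proj_point p"
    unfolding proj_point_def by (rule CollectI, rule exI[of _ 1]) simp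
  then show ?thesis
    using assms unfolding proj_point_def by auto
qed

lemma proj_zeros_subset: "proj_zeros d c \<subseteq> proj_space"
  unfolding proj_zeros_def proj_space_def by blast

lemma image_matvec_proj_point: "matvec A ` proj_point p = proj_point (matvec A p)"
proof
  show "matvec A ` proj_point p \<subseteq> proj_point (matvec A p)"
    unfolding proj_point_def by (auto simp: matvec_smult)
  show "proj_point (matvec A p) \<subseteq> matvec A ` proj_point p"
  proof
    fix q
    assume "q \<in> proj_point (matvec A p)"
    then obtain c where "c \<noteq> 0" "q = matvec A (\<lambda>i. c * p i)"
      unfolding proj_point_def by (auto simp: matvec_smult)
    moreover have "(\<lambda>i. c * p i) \<in> proj_point p"
      unfolding proj_point_def using \<open>c \<noteq> 0\<close> by blast
    ultimately show "q \<in> matvec A ` proj_point p"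
      by blast
  qed
qed

lemma pmap_proj_point: "\<exists>i. p i \<noteq> 0 \<Longrightarrow> pmap A (proj_point p) = proj_point (matvec A p)"
  unfolding pmap_def by (simp add: proj_point_in_proj_space image_matvec_proj_point)

lemma pmap_in_proj_space:
  assumes "mat_invertible A" "L \<in> proj_space"
  shows "pmap A L \<in> proj_space"
proof -
  obtain B where B: "matmul B A = matid"
    using assms(1) unfolding mat_invertible_def by blast
  obtain p where p: "\<exists>i. p i \<noteq> 0" "L = proj_point p"
    using assms(2) by (rule proj_spaceE)
  show ?thesis
    using matvec_nonzero[OF B p(1)] p by (simp add: pmap_proj_point proj_point_in_proj_space)
qed

lemma pmap_matmul:
  assumes "mat_invertible B"
  shows "restrict (pmap A \<circ> pmap B) proj_space = pmap (matmul A B)"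
proof
  fix L
  show "restrict (pmap A \<circ> pmap B) proj_space L = pmap (matmul A B) L"
  proof (cases "L \<in> proj_space")
    case True
    obtain B' where B': "matmul B' B = matid"
      using assms unfolding mat_invertible_def by blast
    obtain p where p: "\<exists>i. p i \<noteq> 0" "L = proj_point p"
      using True by (rule proj_spaceE)
    show ?thesis
      using True matvec_nonzero[OF B' p(1)] p by (simp add: pmap_proj_point matvec_matmul)
  next
    case False
    then show ?thesis
      by (simp add: pmap_def)
  qed
qed

lemma pmap_matid: "pmap matid = restrict id proj_space"
  unfolding pmap_def by (simp add: restrict_def fun_eq_iff)

lemma carrier_lin_aut:
  "carrier (lin_aut d c) = {pmap A | A. mat_invertible A \<and> pmap A ` proj_zeros d c = proj_zeros d c}"
  by (simp add: lin_aut_def)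

lemma mult_lin_aut: "f \<otimes>\<^bsub>lin_aut d c\<^esub> g = restrict (f \<circ> g) proj_space"
  by (simp add: lin_aut_def)

lemma one_lin_aut: "\<one>\<^bsub>lin_aut d c\<^esub> = restrict id proj_space"
  by (simp add: lin_aut_def)

lemma image_pmap_matmul:
  assumes "mat_invertible B"
  shows "pmap (matmul A B) ` proj_zeros d c = pmap A ` pmap B ` proj_zeros d c"
  using proj_zeros_subset[of d c] by (force simp: pmap_matmul[OF assms, symmetric])

lemma group_lin_aut: "group (lin_aut d (c :: exps5 \<Rightarrow> 'b::field))"
proof (rule groupI)
  fix f g
  assume "f \<in> carrier (lin_aut d c)" "g \<in> carrier (lin_aut d c)"
  then obtain A B where A: "f = pmap A" "mat_invertible A" "pmap A ` proj_zeros d c = proj_zeros d c"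
    and B: "g = pmap B" "mat_invertible B" "pmap B ` proj_zeros d c = proj_zeros d c"
    unfolding carrier_lin_aut by blast
  then have "f \<otimes>\<^bsub>lin_aut d c\<^esub> g = pmap (matmul A B)"
    "pmap (matmul A B) ` proj_zeros d c = proj_zeros d c"
    unfolding mult_lin_aut by (simp_all add: pmap_matmul image_pmap_matmul)
  with mat_invertible_matmul[OF A(2) B(2)] show "f \<otimes>\<^bsub>lin_aut d c\<^esub> g \<in> carrier (lin_aut d c)"
    unfolding carrier_lin_aut by blast
next
  have "pmap matid ` proj_zeros d c = proj_zeros d c"
    unfolding pmap_matid using proj_zeros_subset[of d c] by force
  with mat_invertible_matid show "\<one>\<^bsub>lin_aut d c\<^esub> \<in> carrier (lin_aut d c)"
    unfolding carrier_lin_aut one_lin_aut pmap_matid[symmetric] by blast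
next
  fix f g h
  assume "f \<in> carrier (lin_aut d c)" "g \<in> carrier (lin_aut d c)" "h \<in> carrier (lin_aut d c)"
  then obtain B C where B: "g = pmap B" "mat_invertible B" and C: "h = pmap C" "mat_invertible C"
    unfolding carrier_lin_aut by blast
  show "f \<otimes>\<^bsub>lin_aut d c\<^esub> g \<otimes>\<^bsub>lin_aut d c\<^esub> h = f \<otimes>\<^bsub>lin_aut d c\<^esub> (g \<otimes>\<^bsub>lin_aut d c\<^esub> h)"
    unfolding mult_lin_aut
  proof
    fix L
    show "restrict (restrict (f \<circ> g) proj_space \<circ> h) proj_space L
        = restrict (f \<circ> restrict (g \<circ> h) proj_space) proj_space L"
      using pmap_in_proj_space[OF C(2), of L] pmap_in_proj_space[OF B(2)] B(1) C(1) by auto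
  qed
next
  fix f
  assume "f \<in> carrier (lin_aut d c)"
  then obtain A where A: "f = pmap A" "mat_invertible A"
    unfolding carrier_lin_aut by blast
  show "\<one>\<^bsub>lin_aut d c\<^esub> \<otimes>\<^bsub>lin_aut d c\<^esub> f = f"
    unfolding mult_lin_aut one_lin_aut
  proof
    fix L
    show "restrict (restrict id proj_space \<circ> f) proj_space L = f L"
      using pmap_in_proj_space[OF A(2), of L] A(1) by (auto simp: pmap_def)
  qed
next
  fix f
  assume "f \<in> carrier (lin_aut d c)"
  then obtain A where f: "f = pmap A" "mat_invertible A" "pmap A ` proj_zeros d c = proj_zeros d c"
    unfolding carrier_lin_aut by blast
  then obtain B where B: "matmul A B = matid" "matmul B A = matid"
    unfolding mat_invertible_def by blast
  then have "mat_invertible B"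
    unfolding mat_invertible_def by blast
  moreover have "pmap B ` proj_zeros d c = proj_zeros d c"
  proof -
    have "pmap B ` proj_zeros d c = pmap (matmul B A) ` proj_zeros d c"
      using image_pmap_matmul[OF f(2), of B d c] f(3) by simp
    also have "\<dots> = proj_zeros d c"
      unfolding B(2) pmap_matid using proj_zeros_subset[of d c] by force
    finally show ?thesis .
  qed
  moreover have "pmap B \<otimes>\<^bsub>lin_aut d c\<^esub> f = \<one>\<^bsub>lin_aut d c\<^esub>"
    unfolding mult_lin_aut one_lin_aut f(1) pmap_matmul[OF f(2)] B(2) pmap_matid ..
  ultimately show "\<exists>g\<in>carrier (lin_aut d c). g \<otimes>\<^bsub>lin_aut d c\<^esub> f = \<one>\<^bsub>lin_aut d c\<^esub>"
    unfolding carrier_lin_aut by blast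
qed

lemma pmap_in_lin_aut:
  fixes A :: "5 \<Rightarrow> 5 \<Rightarrow> 'b::field"
  assumes "mat_invertible A" and invariant: "\<And>p. hom_eval d c (matvec A p) = hom_eval d c p"
  shows "pmap A \<in> carrier (lin_aut d c)"
proof -
  obtain B where B: "matmul A B = matid" "matmul B A = matid"
    using assms(1) unfolding mat_invertible_def by blast
  have "pmap A ` proj_zeros d c = proj_zeros d c"
  proof
    show "pmap A ` proj_zeros d c \<subseteq> proj_zeros d c"
    proof
      fix L
      assume "L \<in> pmap A ` proj_zeros d c"
      then obtain p where p: "\<exists>i. p i \<noteq> 0" "hom_eval d c p = 0" "L = pmap A (proj_point p)"
        unfolding proj_zeros_def by blast
      then show "L \<in> proj_zeros d c"
        unfolding proj_zeros_def using matvec_nonzero[OF B(2) p(1)] invariant[of p]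
        by (auto simp: pmap_proj_point)
    qed
    show "proj_zeros d c \<subseteq> pmap A ` proj_zeros d c"
    proof
      fix L
      assume "L \<in> proj_zeros d c"
      then obtain q where q: "\<exists>i. q i \<noteq> 0" "hom_eval d c q = 0" "L = proj_point q"
        unfolding proj_zeros_def by blast
      have "\<exists>i. matvec B q i \<noteq> 0"
        by (rule matvec_nonzero[OF B(1) q(1)])
      moreover have "matvec A (matvec B q) = q"
        using matvec_matmul[of A B q] B(1) by simp
      ultimately have "proj_point (matvec B q) \<in> proj_zeros d c"
        "pmap A (proj_point (matvec B q)) = L"
        unfolding proj_zeros_def using invariant[of "matvec B q"] q by (auto simp: pmap_proj_point)
      then show "L \<in> pmap A ` proj_zeros d c"
        by blast
    qed
  qed
  with assms(1) show ?thesis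
    unfolding carrier_lin_aut by blast
qed

section \<open>The dihedral group of order 10\<close>

text \<open>Unlike \<open>group.iso_sym\<close>, this needs only closure of \<open>D\<close> under its multiplication;
  it is applied to \<open>dihedral 5\<close>, for which no group structure is established.\<close>
lemma iso_sym_of_mult_closed:
  assumes "h \<in> iso D H"
    and "\<And>x y. x \<in> carrier D \<Longrightarrow> y \<in> carrier D \<Longrightarrow> x \<otimes>\<^bsub>D\<^esub> y \<in> carrier D"
  shows "H \<cong> D"
proof -
  have h: "h \<in> hom D H" "bij_betw h (carrier D) (carrier H)"
    using assms(1) by (auto simp: iso_def)
  define k where "k = inv_into (carrier D) h"
  have k: "bij_betw k (carrier H) (carrier D)"
    unfolding k_def using h(2) by (rule bij_betw_inv_into)
  then have k_in: "k x \<in> carrier D" if "x \<in> carrier H" for x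
    using that by (meson bij_betwE)
  have "k \<in> hom H D"
  proof (rule homI)
    fix x y
    assume "x \<in> carrier H" "y \<in> carrier H"
    then show "k (x \<otimes>\<^bsub>H\<^esub> y) = k x \<otimes>\<^bsub>D\<^esub> k y"
      unfolding k_def
      using h k_in[unfolded k_def] assms(2) bij_betw_inv_into_right[OF h(2)]
      by (intro inv_into_f_eq) (auto simp: bij_betw_def hom_def)
  qed (rule k_in)
  with k show ?thesis
    by (blast intro: is_isoI isoI)
qed

lemma (in group) ord_eq_prime:
  assumes "x \<in> carrier G" "prime p" "x [^] p = \<one>" "x \<noteq> \<one>"
  shows "ord x = p"
  using assms pow_eq_id[of x p] ord_eq_1[of x] by (auto simp: prime_nat_iff)

lemma dihedral_5_mult:
  "(i, s) \<otimes>\<^bsub>dihedral 5\<^esub> (j, t) = (if s then (i + 5 - j) mod 5 else (i + j) mod 5, s \<noteq> t)"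
  by (simp add: dihedral_def)

lemma carrier_dihedral_5: "carrier (dihedral 5) = {0..<5} \<times> UNIV"
  by (simp add: dihedral_def)

lemma card_carrier_dihedral_5: "card (carrier (dihedral 5)) = 10"
  by (simp add: carrier_dihedral_5 card_cartesian_product)

locale dihedral_5_embedding = group G for G (structure) +
  fixes f :: "nat \<times> bool \<Rightarrow> 'a"
  assumes f_hom: "f \<in> hom (dihedral 5) G"
    and f_inj: "inj_on f (carrier (dihedral 5))"
begin

lemma f_closed: "i < 5 \<Longrightarrow> f (i, s) \<in> carrier G"
  using f_hom by (auto simp: hom_def carrier_dihedral_5)

lemma f_mult: "i < 5 \<Longrightarrow> j < 5 \<Longrightarrow> f (i, s) \<otimes> f (j, t) = f ((i, s) \<otimes>\<^bsub>dihedral 5\<^esub> (j, t))"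
  using f_hom by (auto simp: hom_def carrier_dihedral_5)

lemma f_one: "f (0, False) = \<one>"
  using f_mult[of 0 0 False False] f_closed[of 0 False] by (simp add: dihedral_5_mult)

lemma f_rotation_pow: "f (1, False) [^] n = f (n mod 5, False)"
proof (induction n)
  case 0
  then show ?case
    by (simp add: f_one)
next
  case (Suc n)
  then show ?case
    by (simp add: f_mult dihedral_5_mult mod_Suc_eq)
qed

lemma f_image_subgroup: "subgroup (f ` carrier (dihedral 5)) G"
proof (rule subgroupI)
  show "f ` carrier (dihedral 5) \<subseteq> carrier G"
    using f_closed by (auto simp: carrier_dihedral_5)
  show "f ` carrier (dihedral 5) \<noteq> {}"
    by (simp add: carrier_dihedral_5)
next
  fix x
  assume "x \<in> f ` carrier (dihedral 5)"
  then obtain i s where x: "i < 5" "x = f (i, s)"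
    by (auto simp: carrier_dihedral_5)
  define i' where "i' = (if s then i else (5 - i) mod 5)"
  have "i' < 5"
    unfolding i'_def using x(1) by simp
  have "((5 - i) mod 5 + i) mod 5 = 0"
    using x(1) by (cases "i = 0") auto
  then have "(i', s) \<otimes>\<^bsub>dihedral 5\<^esub> (i, s) = (0, False)"
    unfolding i'_def dihedral_5_mult by simp
  then have "f (i', s) \<otimes> x = \<one>"
    using x \<open>i' < 5\<close> by (simp add: f_mult f_one)
  then have "inv x = f (i', s)"
    using inv_equality f_closed x \<open>i' < 5\<close> by blast
  with \<open>i' < 5\<close> show "inv x \<in> f ` carrier (dihedral 5)"
    by (auto simp: carrier_dihedral_5)
next
  fix x y
  assume "x \<in> f ` carrier (dihedral 5)" "y \<in> f ` carrier (dihedral 5)"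
  then show "x \<otimes> y \<in> f ` carrier (dihedral 5)"
    by (auto simp: carrier_dihedral_5 f_mult dihedral_5_mult)
qed

lemma generate_f_generators: "generate G {f (1, False), f (0, True)} = f ` carrier (dihedral 5)"
proof
  show "generate G {f (1, False), f (0, True)} \<subseteq> f ` carrier (dihedral 5)"
    by (rule generate_subgroup_incl[OF _ f_image_subgroup]) (auto simp: carrier_dihedral_5)
  show "f ` carrier (dihedral 5) \<subseteq> generate G {f (1, False), f (0, True)}"
  proof
    fix x
    assume "x \<in> f ` carrier (dihedral 5)"
    then obtain i s where "i < 5" "x = f (i, s)"
      by (auto simp: carrier_dihedral_5)
    have "f (1, False) [^] n \<in> generate G {f (1, False), f (0, True)}" for n :: nat
      by (induction n) (auto intro: generate.one generate.eng generate.incl)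
    moreover have "f (i, False) = f (1, False) [^] i"
      using f_rotation_pow[of i] \<open>i < 5\<close> by simp
    ultimately have rotation: "f (i, False) \<in> generate G {f (1, False), f (0, True)}"
      by simp
    have "f (i, True) = f (i, False) \<otimes> f (0, True)"
      using \<open>i < 5\<close> by (simp add: f_mult dihedral_5_mult)
    with rotation \<open>x = f (i, s)\<close> show "x \<in> generate G {f (1, False), f (0, True)}"
      by (cases s) (auto intro: generate.eng generate.incl)
  qed
qed

lemma f_eq_one_iff: "i < 5 \<Longrightarrow> f (i, s) = \<one> \<longleftrightarrow> i = 0 \<and> \<not> s"
  using inj_onD[OF f_inj, of "(i, s)" "(0, False)"] by (auto simp: f_one carrier_dihedral_5)

lemma ord_f_rotation: "ord (f (1, False)) = 5"
proof (rule ord_eq_prime)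
  show "prime (5::nat)"
    by (auto simp: prime_nat_iff' atLeastLessThan_nat_numeral)
  show "f (1, False) [^] (5::nat) = \<one>"
    using f_rotation_pow[of 5] f_one by simp
qed (simp_all add: f_closed f_eq_one_iff)

lemma ord_f_reflection: "ord (f (0, True)) = 2"
proof (rule ord_eq_prime)
  show "f (0, True) [^] (2::nat) = \<one>"
    using f_closed[of 0 True] by (simp add: numeral_2_eq_2 f_mult dihedral_5_mult f_one)
qed (simp_all add: f_closed f_eq_one_iff)

lemma card_f_image: "card (f ` carrier (dihedral 5)) = 10"
  using card_image[OF f_inj] card_carrier_dihedral_5 by simp

lemma f_image_iso: "G\<lparr>carrier := f ` carrier (dihedral 5)\<rparr> \<cong> dihedral 5"
proof (rule iso_sym_of_mult_closed)
  show "f \<in> iso (dihedral 5) (G\<lparr>carrier := f ` carrier (dihedral 5)\<rparr>)"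
    using f_hom f_inj by (auto simp: iso_def hom_def bij_betw_def)
  show "x \<otimes>\<^bsub>dihedral 5\<^esub> y \<in> carrier (dihedral 5)"
    if "x \<in> carrier (dihedral 5)" "y \<in> carrier (dihedral 5)" for x y
    using that by (auto simp: carrier_dihedral_5 dihedral_5_mult)
qed

end

lemma Fab_alpha:
  fixes w :: "'b::comm_ring_1"
  assumes "w^5 = 1"
  shows "Fab a b (w^2*u) (w^3*v) (w*x) y (w^4*z) = Fab a b u v x y z"
proof -
  have "w^10 = 1"
    using assms power_mult[of w 5 2] by simp
  have "Fab a b (w^2*u) (w^3*v) (w*x) y (w^4*z)
      = w^5*(x*u^2 + 2*y*u*v + 2*x^2*v + b*x*y*z) + w^10*(z*v^2 + 2*z^2*u) + a*y^3"
    unfolding Fab_def by (simp add: algebra_simps eval_nat_numeral)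
  also have "\<dots> = Fab a b u v x y z"
    unfolding Fab_def assms \<open>w^10 = 1\<close> by (simp add: algebra_simps)
  finally show ?thesis .
qed

lemma Fab_iota: "Fab a b v u z y x = Fab a b u v x y z"
  unfolding Fab_def by (simp add: algebra_simps)

lemma power_eq_power_mod:
  fixes z :: "'b::monoid_mult"
  assumes "z^n = 1"
  shows "z^m = z^(m mod n)"
proof -
  have "z^m = (z^n)^(m div n) * z^(m mod n)"
    by (simp flip: power_mult power_add)
  with assms show ?thesis
    by simp
qed

lemma power_inj_on_primitive_root:
  fixes z :: "'b::field"
  assumes "z \<noteq> 0" and primitive: "\<forall>j. 0 < j \<and> j < n \<longrightarrow> z^j \<noteq> 1"
    and "i < n" "j < n" "z^i = z^j"
  shows "i = j"
proof -
  have False if "m < k" "k < n" "z^m = z^k" for m k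
  proof -
    have "z^m * z^(k - m) = z^k"
      using that(1) by (simp flip: power_add)
    also have "\<dots> = z^m * 1"
      using that(3) by simp
    finally have "z^(k - m) = 1"
      using \<open>z \<noteq> 0\<close> by simp
    with primitive that show False
      by simp
  qed
  with assms show ?thesis
    by (metis linorder_neqE_nat)
qed

lemma pmap_eq_imp_matvec_smult:
  fixes M N :: "5 \<Rightarrow> 5 \<Rightarrow> 'b::field"
  assumes "pmap M = pmap N" "\<exists>i. p i \<noteq> 0"
  shows "\<exists>c. c \<noteq> 0 \<and> matvec M p = (\<lambda>k. c * matvec N p k)"
proof -
  have "proj_point (matvec M p) = proj_point (matvec N p)"
    using assms pmap_proj_point[OF assms(2)] by metis
  then show ?thesis
    by (rule proj_point_eq_imp_smult)
qed

definition alpha_weight :: "5 \<Rightarrow> nat" where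
  "alpha_weight = vec5 2 3 1 0 4"

text \<open>\<open>dihedral_mat z (i, s)\<close> is the matrix of \<open>\<alpha>\<^sup>i \<iota>\<^sup>s\<close>; \<open>alpha_weight k\<close> is the
  exponent of \<open>z\<close> in the \<open>k\<close>-th diagonal entry of \<open>alpha_mat z\<close>.\<close>
definition dihedral_mat :: "'b::field \<Rightarrow> nat \<times> bool \<Rightarrow> 5 \<Rightarrow> 5 \<Rightarrow> 'b" where
  "dihedral_mat z = (\<lambda>(i, s). mono_mat (if s then iota_perm else id) (\<lambda>k. z ^ (alpha_weight k * i)))"

lemma iota_perm_eq_vec5: "iota_perm = vec5 1 0 4 3 2"
  by (simp add: fun_eq_iff iota_perm_def vec5_def)

lemma iota_perm_iota_perm [simp]: "iota_perm (iota_perm k) = k"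
  by (rule all_5I[of "\<lambda>k. iota_perm (iota_perm k) = k"]) (simp_all add: iota_perm_eq_vec5)

lemma matvec_dihedral_mat:
  "matvec (dihedral_mat z (i, s)) p = (\<lambda>k. z ^ (alpha_weight k * i) * p (if s then iota_perm k else k))"
  by (simp add: dihedral_mat_def matvec_mono_mat)

lemma alpha_mat_eq_dihedral_mat: "alpha_mat z = dihedral_mat z (1, False)"
proof -
  have "z ^ alpha_weight i = (if i = 0 then z^2 else if i = 1 then z^3 else if i = 2 then z
      else if i = 3 then 1 else z^4)" for i
    by (rule all_5I[of "\<lambda>i. z ^ alpha_weight i = _ i"]) (simp_all add: alpha_weight_def distinct_5)
  then show ?thesis
    unfolding alpha_mat_def dihedral_mat_def mono_mat_def by (simp add: fun_eq_iff)
qed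

lemma iota_mat_eq_dihedral_mat: "iota_mat = dihedral_mat z (0, True)"
  unfolding iota_mat_def dihedral_mat_def mono_mat_def by (simp add: fun_eq_iff)

lemma mat_invertible_dihedral_mat:
  fixes z :: "'b::field"
  assumes "z \<noteq> 0"
  shows "mat_invertible (dihedral_mat z x)"
  using assms unfolding dihedral_mat_def
  by (cases x) (auto intro!: mat_invertible_mono_mat[where \<tau> = "if snd x then iota_perm else id"])

lemma alpha_weight_iota_perm: "(alpha_weight k + alpha_weight (iota_perm k)) mod 5 = 0"
  by (rule all_5I[of "\<lambda>k. (alpha_weight k + alpha_weight (iota_perm k)) mod 5 = 0"])
    (simp_all add: alpha_weight_def iota_perm_eq_vec5)

text \<open>This is \<open>\<iota> \<alpha> \<iota> = \<alpha>\<^sup>-\<^sup>1\<close> on the level of matrix entries: the weights of \<open>k\<close>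
  and \<open>iota_perm k\<close> add up to \<open>0 mod 5\<close>.\<close>
lemma alpha_weight_power_iota:
  fixes z :: "'b::field"
  assumes z: "z^5 = 1" and "j < 5"
  shows "z ^ (alpha_weight k * i) * z ^ (alpha_weight (iota_perm k) * j)
       = z ^ (alpha_weight k * ((i + 5 - j) mod 5))"
proof -
  define a c where "a = z ^ alpha_weight k" and "c = z ^ alpha_weight (iota_perm k)"
  have a5: "a^5 = 1"
    unfolding a_def using z by (metis power_mult mult.commute power_one)
  then have "a \<noteq> 0"
    by (metis zero_neq_one zero_power zero_less_numeral)
  have "c * a = 1"
    using power_eq_power_mod[OF z, of "alpha_weight k + alpha_weight (iota_perm k)"]
    unfolding a_def c_def alpha_weight_iota_perm by (simp add: power_add mult.commute)
  then have "c^j * a^j = a^(5 - j) * a^j"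
    using a5 \<open>j < 5\<close> by (simp flip: power_mult_distrib power_add)
  then have "c^j = a^(5 - j)"
    using \<open>a \<noteq> 0\<close> by simp
  then have "a^i * c^j = a^((i + 5 - j) mod 5)"
    using power_eq_power_mod[OF a5, of "i + 5 - j"] \<open>j < 5\<close> by (simp flip: power_add)
  then show ?thesis
    unfolding a_def c_def by (simp flip: power_mult)
qed


lemma dihedral_mat_mult:
  fixes z :: "'b::field"
  assumes z: "z^5 = 1" and "j < 5"
  shows "matmul (dihedral_mat z (i, s)) (dihedral_mat z (j, t))
       = dihedral_mat z ((i, s) \<otimes>\<^bsub>dihedral 5\<^esub> (j, t))"
proof -
  define m where "m = (if s then (i + 5 - j) mod 5 else (i + j) mod 5)"
  have perm: "(if t then iota_perm else id) \<circ> (if s then iota_perm else id)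
      = (if s \<noteq> t then iota_perm else id)"
    by (auto simp: fun_eq_iff)
  have entry: "z ^ (alpha_weight k * i) * z ^ (alpha_weight ((if s then iota_perm else id) k) * j)
      = z ^ (alpha_weight k * m)" for k
  proof (cases s)
    case True
    then show ?thesis
      unfolding m_def using alpha_weight_power_iota[OF assms] by simp
  next
    case False
    have "z ^ (alpha_weight k * i) * z ^ (alpha_weight k * j) = z ^ (alpha_weight k * (i + j) mod 5)"
      using power_eq_power_mod[OF z] by (simp add: algebra_simps flip: power_add)
    also have "\<dots> = z ^ (alpha_weight k * ((i + j) mod 5))"
      using power_eq_power_mod[OF z, of "alpha_weight k * ((i + j) mod 5)"]
      by (simp add: mod_mult_right_eq)
    finally show ?thesis
      unfolding m_def using False by simp
  qed
  have "matmul (dihedral_mat z (i, s)) (dihedral_mat z (j, t))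
      = mono_mat ((if t then iota_perm else id) \<circ> (if s then iota_perm else id))
          (\<lambda>k. z ^ (alpha_weight k * i) * z ^ (alpha_weight ((if s then iota_perm else id) k) * j))"
    by (simp add: dihedral_mat_def matmul_mono_mat)
  also have "\<dots> = dihedral_mat z ((i, s) \<otimes>\<^bsub>dihedral 5\<^esub> (j, t))"
    unfolding perm entry dihedral_mat_def dihedral_5_mult m_def by simp
  finally show ?thesis .
qed

lemma hom_eval_Fab_coeffs_dihedral_mat:
  fixes z :: "'b::field"
  assumes "z^5 = 1"
  shows "hom_eval 3 (Fab_coeffs a b) (matvec (dihedral_mat z (i, s)) p) = hom_eval 3 (Fab_coeffs a b) p"
proof -
  define w where "w = z^i"
  have w5: "w^5 = 1"
    unfolding w_def using assms by (metis power_mult mult.commute power_one)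
  have "matvec (dihedral_mat z (i, s)) p = (\<lambda>k. w ^ alpha_weight k * p (if s then iota_perm k else k))"
    unfolding matvec_dihedral_mat w_def by (simp add: mult.commute[of "alpha_weight _"] power_mult)
  then show ?thesis
    unfolding hom_eval_Fab_coeffs
    by (simp add: alpha_weight_def iota_perm_eq_vec5 Fab_alpha[OF w5] Fab_iota)
qed

lemma pmap_dihedral_mat_inj:
  fixes z :: "'b::field"
  assumes "z \<noteq> 0" and primitive: "\<forall>j. 0 < j \<and> j < 5 \<longrightarrow> z^j \<noteq> 1"
  shows "inj_on (\<lambda>x. pmap (dihedral_mat z x)) (carrier (dihedral 5))"
proof (rule inj_onI, clarsimp simp: carrier_dihedral_5)
  fix i j s t
  assume "i < 5" "j < 5" and eq: "pmap (dihedral_mat z (i, s)) = pmap (dihedral_mat z (j, t))"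
  have "\<exists>k. vec5 1 0 0 0 0 k \<noteq> (0 :: 'b)"
    by (rule exI[of _ 0]) simp
  then obtain c where "c \<noteq> 0" and c: "matvec (dihedral_mat z (i, s)) (vec5 1 0 0 0 0)
      = (\<lambda>k. c * matvec (dihedral_mat z (j, t)) (vec5 1 0 0 0 0) k)"
    using pmap_eq_imp_matvec_smult[OF eq] by blast
  have "s = t"
    using fun_cong[OF c, of 0] \<open>c \<noteq> 0\<close> \<open>z \<noteq> 0\<close>
    by (cases s; cases t) (simp_all add: matvec_dihedral_mat alpha_weight_def iota_perm_eq_vec5)
  define e :: "5 \<Rightarrow> 'b" where "e = (if s then vec5 0 0 0 1 1 else vec5 0 0 1 1 0)"
  have e: "matvec (dihedral_mat z (m, s)) e = vec5 0 0 (z^m) 1 0" for m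
    unfolding matvec_dihedral_mat e_def
    by (cases s) (simp_all add: fun_eq_iff all_5 alpha_weight_def iota_perm_eq_vec5)
  have "\<exists>k. e k \<noteq> 0"
    by (rule exI[of _ 3]) (simp add: e_def)
  moreover have "pmap (dihedral_mat z (i, s)) = pmap (dihedral_mat z (j, s))"
    using eq \<open>s = t\<close> by simp
  ultimately obtain d where "vec5 0 0 (z^i) 1 0 = (\<lambda>k. d * vec5 0 0 (z^j) 1 0 k)"
    using pmap_eq_imp_matvec_smult[of "dihedral_mat z (i, s)" "dihedral_mat z (j, s)" e]
    unfolding e by blast
  from fun_cong[OF this, of 3] fun_cong[OF this, of 2] have "z^i = z^j"
    by simp
  with \<open>i < 5\<close> \<open>j < 5\<close> have "i = j"
    by (intro power_inj_on_primitive_root[OF \<open>z \<noteq> 0\<close> primitive])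
  with \<open>s = t\<close> show "i = j \<and> s = t"
    by simp
qed


lemma dihedral_5_embedding_lin_aut_Fab:
  fixes z a b :: "'b::field"
  assumes "z^5 = 1" and primitive: "\<forall>j. 0 < j \<and> j < 5 \<longrightarrow> z^j \<noteq> 1"
  shows "dihedral_5_embedding (lin_aut 3 (Fab_coeffs a b)) (\<lambda>x. pmap (dihedral_mat z x))"
proof -
  have "z \<noteq> 0"
    using assms(1) by (metis zero_neq_one zero_power zero_less_numeral)
  have closed: "pmap (dihedral_mat z x) \<in> carrier (lin_aut 3 (Fab_coeffs a b))" for x
    using pmap_in_lin_aut[OF mat_invertible_dihedral_mat[OF \<open>z \<noteq> 0\<close>]]
      hom_eval_Fab_coeffs_dihedral_mat[OF assms(1)] by (cases x) blast
  have "pmap (dihedral_mat z (x \<otimes>\<^bsub>dihedral 5\<^esub> y))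
      = pmap (dihedral_mat z x) \<otimes>\<^bsub>lin_aut 3 (Fab_coeffs a b)\<^esub> pmap (dihedral_mat z y)"
    if "y \<in> carrier (dihedral 5)" for x y
    using that dihedral_mat_mult[OF assms(1)]
    by (cases x; cases y) (simp add: mult_lin_aut pmap_matmul mat_invertible_dihedral_mat
        \<open>z \<noteq> 0\<close> carrier_dihedral_5)
  then show ?thesis
    unfolding dihedral_5_embedding_def dihedral_5_embedding_axioms_def
    using group_lin_aut closed pmap_dihedral_mat_inj[OF \<open>z \<noteq> 0\<close> primitive]
    by (auto intro: homI)
qed

lemma Fab_dihedral_subgroup:
  fixes z a b :: "'b::field"
  assumes "z^5 = 1" and "\<forall>j. 0 < j \<and> j < 5 \<longrightarrow> z^j \<noteq> 1"
  shows "let G = lin_aut 3 (Fab_coeffs a b); \<alpha> = pmap (alpha_mat z);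
             \<iota> = pmap (iota_mat :: 5 \<Rightarrow> 5 \<Rightarrow> 'b)
         in group G \<and> \<alpha> \<in> carrier G \<and> \<iota> \<in> carrier G \<and> group.ord G \<alpha> = 5 \<and>
            group.ord G \<iota> = 2 \<and> card (generate G {\<alpha>, \<iota>}) = 10 \<and>
            G\<lparr>carrier := generate G {\<alpha>, \<iota>}\<rparr> \<cong> dihedral 5"
proof -
  interpret dihedral_5_embedding "lin_aut 3 (Fab_coeffs a b)" "\<lambda>x. pmap (dihedral_mat z x)"
    using assms by (rule dihedral_5_embedding_lin_aut_Fab)
  show ?thesis
    unfolding Let_def alpha_mat_eq_dihedral_mat iota_mat_eq_dihedral_mat[of z]
    using is_group f_closed ord_f_rotation ord_f_reflection generate_f_generators card_f_image
      f_image_iso by simp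
qed

theorem lemma1p2:
  fixes \<zeta> a1 a2 a3 a4 a5 a6 a7 :: "'a::field_char_0"
  assumes zeta: "\<zeta> ^ 5 = 1" "\<forall>j::nat. 0 < j \<and> j < 5 \<longrightarrow> \<zeta> ^ j \<noteq> 1"
    and smooth: "smooth_hypersurface 3
          (F_coeffs (to_ac a1) (to_ac a2) (to_ac a3) (to_ac a4) (to_ac a5) (to_ac a6) (to_ac a7))"
    and a23: "a2 \<noteq> 0 \<or> a3 \<noteq> 0"
  shows "(\<exists>(A :: 5 \<Rightarrow> 5 \<Rightarrow> 'a alg_closure) a b. mat_invertible A \<and>
            (\<forall>p. hom_eval 3 (F_coeffs (to_ac a1) (to_ac a2) (to_ac a3) (to_ac a4) (to_ac a5)
                   (to_ac a6) (to_ac a7)) (matvec A p) = 0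
                 \<longleftrightarrow> hom_eval 3 (Fab_coeffs a b) p = 0))
       \<and> (\<forall>a b :: 'a alg_closure. smooth_hypersurface 3 (Fab_coeffs a b) \<longleftrightarrow> D_ab a b \<noteq> 0)
       \<and> (\<forall>a b :: 'a alg_closure.
            (let G = lin_aut 3 (Fab_coeffs a b);
                 \<alpha> = pmap (alpha_mat (to_ac \<zeta>));
                 \<iota> = pmap (iota_mat :: 5 \<Rightarrow> 5 \<Rightarrow> 'a alg_closure)
             in group G \<and> \<alpha> \<in> carrier G \<and> \<iota> \<in> carrier G \<and>
                group.ord G \<alpha> = 5 \<and> group.ord G \<iota> = 2 \<and>
                card (generate G {\<alpha>, \<iota>}) = 10 \<and>
                G\<lparr>carrier := generate G {\<alpha>, \<iota>}\<rparr> \<cong> dihedral 5))"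
proof -
  have "to_ac a2 \<noteq> 0 \<or> to_ac a3 \<noteq> 0"
    using a23 by simp
  with smooth have normal_form: "\<exists>(A :: 5 \<Rightarrow> 5 \<Rightarrow> 'a alg_closure) a b. mat_invertible A \<and>
      (\<forall>p. hom_eval 3 (F_coeffs (to_ac a1) (to_ac a2) (to_ac a3) (to_ac a4) (to_ac a5)
             (to_ac a6) (to_ac a7)) (matvec A p) = 0 \<longleftrightarrow> hom_eval 3 (Fab_coeffs a b) p = 0)"
    by (rule F_coeffs_normal_form)
  have "to_ac \<zeta> ^ 5 = 1" "\<forall>j::nat. 0 < j \<and> j < 5 \<longrightarrow> to_ac \<zeta> ^ j \<noteq> 1"
    using zeta by (metis to_ac_power to_ac_1, metis to_ac_power to_ac_eq_1_iff)
  then show ?thesis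
    using normal_form smooth_Fab_coeffs_iff Fab_dihedral_subgroup by blast
qed

end
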